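(* Let $(\mathcal{X},d)$ be a proper metric space, $N\ge1$, $(\boldsymbol{\lambda},\boldsymbol{\nu})\in\Delta_N\times\mathcal{P}_1(\mathcal{X})^N$ and $(\boldsymbol{\lambda}^n,\boldsymbol{\nu}^n)_{n\in\mathbb{N}}$ a sequence in $\Delta_N\times\mathcal{P}_1(\mathcal{X})^N$ such that $$\sum_{i=1}^N|\lambda_i^n-\lambda_i|+\max_{i=1,\dots,N}W_1(\nu_i^n,\nu_i)\to0\quad\text{as }n\to\infty.$$ Then $\mathcal{F}_{\boldsymbol{\lambda}^n,\boldsymbol{\nu}^n}$ $\Gamma$-converges to $\mathcal{F}_{\boldsymbol{\lambda},\boldsymbol{\nu}}$ for the narrow topology; in particular, if $\mu^n\in\mathrm{Med}_{\boldsymbol{\lambda}^n}(\boldsymbol{\nu}^n)$ for all $n$, then every narrow cluster point of $(\mu^n)_n$ belongs to $\mathrm{Med}_{\boldsymbol{\lambda}}(\boldsymbol{\nu})$.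
   Context: A metric space is proper if its closed balls are compact. $\Delta_N$ is the unit simplex of $\mathbb{R}^N$. $\mathcal{P}_1(\mathcal{X})$ is the set of Borel probability measures on $\mathcal{X}$ with finite first moment, with 1-Wasserstein distance $W_1$. For $(\boldsymbol{\lambda},\boldsymbol{\nu})\in\Delta_N\times\mathcal{P}_1(\mathcal{X})^N$, $\mathcal{F}_{\boldsymbol{\lambda},\boldsymbol{\nu}}(\mu)=\sum_{i=1}^N\lambda_iW_1(\nu_i,\mu)$ for $\mu\in\mathcal{P}_1(\mathcal{X})$, and $\mathrm{Med}_{\boldsymbol{\lambda}}(\boldsymbol{\nu})$ is its set of minimizers over $\mathcal{P}_1(\mathcal{X})$. The narrow topology is convergence against bounded continuous functions. *)

theory Defs
  imports "HOL-Probability.Probability"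
begin

definition proper_space :: "'a::metric_space itself \<Rightarrow> bool" where
  "proper_space _ \<longleftrightarrow> (\<forall>(x::'a) r. compact (cball x r))"

text \<open>Unit unit_simplex of R^N, coordinates indexed by 0..N-1.\<close>
definition unit_simplex :: "nat \<Rightarrow> (nat \<Rightarrow> real) set" where
  "unit_simplex N = {l. (\<forall>i<N. 0 \<le> l i) \<and> (\<Sum>i<N. l i) = 1}"

definition P1 :: "'a::metric_space measure set" where
  "P1 = {M. prob_space M \<and> sets M = sets borel \<and> (\<exists>x0. integrable M (\<lambda>x. dist x0 x))}"

definition couplings :: "'a::metric_space measure \<Rightarrow> 'a measure \<Rightarrow> ('a \<times> 'a) measure set" where
  "couplings \<mu> \<nu> = {\<pi>. prob_space \<pi> \<and> sets \<pi> = sets borel \<and>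
      distr \<pi> borel fst = \<mu> \<and> distr \<pi> borel snd = \<nu>}"

text \<open>1-Wasserstein distance (finite on P1).\<close>
definition W1 :: "'a::metric_space measure \<Rightarrow> 'a measure \<Rightarrow> real" where
  "W1 \<mu> \<nu> = enn2real (INF \<pi> \<in> couplings \<mu> \<nu>. \<integral>\<^sup>+ p. ennreal (dist (fst p) (snd p)) \<partial>\<pi>)"

definition Fmed :: "nat \<Rightarrow> (nat \<Rightarrow> real) \<Rightarrow> (nat \<Rightarrow> 'a::metric_space measure) \<Rightarrow> 'a measure \<Rightarrow> real" where
  "Fmed N l \<nu> \<mu> = (\<Sum>i<N. l i * W1 (\<nu> i) \<mu>)"

definition Med :: "nat \<Rightarrow> (nat \<Rightarrow> real) \<Rightarrow> (nat \<Rightarrow> 'a::metric_space measure) \<Rightarrow> 'a measure set" where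
  "Med N l \<nu> = {\<mu> \<in> P1. \<forall>\<mu>' \<in> P1. Fmed N l \<nu> \<mu> \<le> Fmed N l \<nu> \<mu>'}"

definition narrow_conv :: "(nat \<Rightarrow> 'a::metric_space measure) \<Rightarrow> 'a measure \<Rightarrow> bool" where
  "narrow_conv \<mu>s \<mu> \<longleftrightarrow> (\<forall>f::'a \<Rightarrow> real. continuous_on UNIV f \<and> bounded (range f) \<longrightarrow>
      (\<lambda>n. \<integral>x. f x \<partial>(\<mu>s n)) \<longlonglongrightarrow> (\<integral>x. f x \<partial>\<mu>))"

definition gamma_conv_narrow :: "(nat \<Rightarrow> 'a::metric_space measure \<Rightarrow> real) \<Rightarrow> ('a measure \<Rightarrow> real) \<Rightarrow> bool" where
  "gamma_conv_narrow Fs F \<longleftrightarrow>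
     (\<forall>\<mu> \<in> P1. \<forall>\<mu>s. (\<forall>n. \<mu>s n \<in> P1) \<and> narrow_conv \<mu>s \<mu> \<longrightarrow>
         ereal (F \<mu>) \<le> liminf (\<lambda>n. ereal (Fs n (\<mu>s n)))) \<and>
     (\<forall>\<mu> \<in> P1. \<exists>\<mu>s. (\<forall>n. \<mu>s n \<in> P1) \<and> narrow_conv \<mu>s \<mu> \<and>
         limsup (\<lambda>n. ereal (Fs n (\<mu>s n))) \<le> ereal (F \<mu>))"

definition narrow_cluster_point :: "(nat \<Rightarrow> 'a::metric_space measure) \<Rightarrow> 'a measure \<Rightarrow> bool" where
  "narrow_cluster_point \<mu>s \<mu> \<longleftrightarrow> (\<exists>r. strict_mono r \<and> narrow_conv (\<mu>s \<circ> r) \<mu>)"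

end

(* Recovery sequences are constant: the triangle inequality for W1 gives
   |W1 (\<nu>s n i) \<mu> - W1 (\<nu> i) \<mu>| \<le> W1 (\<nu>s n i) (\<nu> i) \<longrightarrow> 0. By the same inequality the liminf bound
   reduces to lower semicontinuity of W1 (\<nu> i) under narrow convergence, and minimisers pass
   to narrow cluster points by the usual Gamma-convergence argument along a subsequence.

   Neither property of W1 needs disintegration or duality. Properness makes a large ball
   compact, so it is covered by finitely many small balls; a continuous partition of unity
   subordinate to them plus one tail cell lets every construction be done cell by cell.
   The triangle inequality glues two couplings by coupling them independently inside each
   cell of the middle marginal. For lower semicontinuity, a near-optimal coupling of \<nu> and
   \<mu>s n is discretised into a finite plan between cells; its second marginal, the vector of
   cell masses of \<mu>s n, converges by narrow convergence to that of \<mu>, so after a cheap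
   correction of the plan it can be turned back into a coupling of \<nu> and \<mu>. *)
theory Submission
  imports Defs
begin

section \<open>Proper metric spaces\<close>

lemma proper_space_countable_dense:
  assumes "proper_space TYPE('a::metric_space)"
  obtains D :: "'a::metric_space set" where "countable D" "\<And>x e. e > 0 \<Longrightarrow> \<exists>d\<in>D. dist x d < e"
proof -
  fix x0 :: 'a
  have "\<exists>D. finite D \<and> cball x0 (real n) \<subseteq> (\<Union>d\<in>D. ball d (1 / Suc n))" for n
  proof -
    have "compact (cball x0 (real n))" using assms unfolding proper_space_def by blast
    moreover have "x \<in> ball x (1 / Suc n)" for x :: 'a by simp
    then have "cball x0 (real n) \<subseteq> (\<Union>d\<in>UNIV. ball d (1 / Suc n))" by blast
    ultimately show ?thesis by (metis compactE_image open_ball)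
  qed
  then obtain D where D: "\<And>n. finite (D n)" "\<And>n. cball x0 (real n) \<subseteq> (\<Union>d\<in>D n. ball d (1 / Suc n))"
    by metis
  show thesis
  proof
    show "countable (\<Union>n. D n)" using D(1) by (auto intro: countable_finite)
    fix x :: 'a and e :: real assume "e > 0"
    obtain n1 :: nat where n1: "dist x0 x \<le> n1" using real_arch_simple by blast
    obtain n2 :: nat where n2: "1 / Suc n2 < e" using \<open>e > 0\<close> by (metis nat_approx_posE)
    have "x \<in> cball x0 (real (max n1 n2))" using n1 by auto
    then obtain d where "d \<in> D (max n1 n2)" "dist d x < 1 / Suc (max n1 n2)"
      using D(2)[of "max n1 n2"] by fastforce
    moreover have "1 / Suc (max n1 n2) \<le> 1 / Suc n2" by (simp add: frac_le)
    ultimately show "\<exists>d\<in>\<Union>n. D n. dist x d < e" using n2 by (force simp: dist_commute)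
  qed
qed

lemma proper_space_countable_basis:
  assumes "proper_space TYPE('a::metric_space)"
  obtains B :: "'a::metric_space set set" where "countable B" "topological_basis B"
proof -
  obtain D :: "'a set" where D: "countable D" "\<And>x e. e > 0 \<Longrightarrow> \<exists>d\<in>D. dist x d < e"
    using proper_space_countable_dense[OF assms] by blast
  define B where "B = (\<lambda>(d, n::nat). ball d (1 / Suc n)) ` (D \<times> UNIV)"
  show thesis
  proof
    show "countable B" unfolding B_def using D(1) by auto
    show "topological_basis B"
    proof (rule topological_basisI)
      show "open b" if "b \<in> B" for b using that unfolding B_def by auto
      fix U :: "'a set" and x :: 'a assume "open U" "x \<in> U"
      then obtain e where "e > 0" "ball x e \<subseteq> U" by (auto simp: open_contains_ball)
      obtain n :: nat where n: "1 / Suc n < e / 2" using \<open>e > 0\<close>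
        by (metis nat_approx_posE zero_less_divide_iff zero_less_numeral)
      obtain d where d: "d \<in> D" "dist x d < 1 / Suc n" using D(2)[of "1 / Suc n"] by auto
      have "ball d (1 / Suc n) \<subseteq> ball x e"
      proof
        fix y assume "y \<in> ball d (1 / Suc n)"
        then have "dist x y \<le> dist x d + dist d y" "dist d y < 1 / Suc n" by (auto intro: dist_triangle)
        then show "y \<in> ball x e" using d(2) n by simp
      qed
      then show "\<exists>b\<in>B. x \<in> b \<and> b \<subseteq> U"
        using d \<open>ball x e \<subseteq> U\<close> unfolding B_def by (auto simp: dist_commute intro!: bexI[of _ "ball d (1 / Suc n)"])
    qed
  qed
qed

text \<open>Couplings are measures on \<open>borel :: ('a \<times> 'a) measure\<close>, while products of measures live on
  the product \<open>\<sigma>\<close>-algebra; the two agree because a proper space is separable.\<close>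
lemma sets_pair_borel_proper:
  assumes "proper_space TYPE('a::metric_space)"
  shows "sets (borel \<Otimes>\<^sub>M borel :: ('a \<times> 'a) measure) = sets borel"
proof
  show "sets (borel \<Otimes>\<^sub>M borel :: ('a \<times> 'a) measure) \<subseteq> sets borel"
  proof (rule sets_pair_in_sets)
    fix a b :: "'a set" assume "a \<in> sets borel" "b \<in> sets borel"
    moreover have "fst \<in> borel_measurable (borel :: ('a \<times> 'a) measure)"
      "snd \<in> borel_measurable (borel :: ('a \<times> 'a) measure)"
      by (intro borel_measurable_continuous_onI continuous_intros)+
    moreover have "a \<times> b = (fst -` a \<inter> space borel) \<inter> (snd -` b \<inter> space borel)" by auto
    ultimately show "a \<times> b \<in> sets borel" by (metis measurable_sets sets.Int)
  qed
  obtain B :: "'a set set" where B: "countable B" "topological_basis B"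
    using proper_space_countable_basis[OF assms] by blast
  let ?P = "(\<lambda>(a, b). a \<times> b) ` (B \<times> B)"
  have "borel = sigma UNIV ?P"
    using B by (intro borel_eq_countable_basis topological_basis_prod) auto
  then have "sets (borel :: ('a \<times> 'a) measure) = sigma_sets UNIV ?P"
    by (metis Pow_UNIV sets_measure_of top_greatest)
  also have "\<dots> \<subseteq> sets (borel \<Otimes>\<^sub>M borel)"
    by (rule sets.sigma_sets_subset') (use topological_basis_open[OF B(2)] in \<open>auto simp: space_pair_measure
        simp flip: UNIV_Times_UNIV\<close>)
  finally show "sets borel \<subseteq> sets (borel \<Otimes>\<^sub>M borel :: ('a \<times> 'a) measure)" .
qed

section \<open>Couplings and the Wasserstein distance\<close>

lemma P1D:
  assumes "\<mu> \<in> P1"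
  shows "prob_space \<mu>" "sets \<mu> = sets borel" "space \<mu> = UNIV"
  using assms unfolding P1_def by (auto dest: sets_eq_imp_space_eq)

lemma measurable_P1 [measurable_cong]: "\<mu> \<in> P1 \<Longrightarrow> measurable \<mu> N = measurable borel N"
  using P1D by (intro measurable_cong_sets) auto

lemma borel_measurable_continuous_ennreal:
  assumes "continuous_on UNIV (f :: 'b::topological_space \<Rightarrow> real)"
  shows "(\<lambda>x. ennreal (f x)) \<in> borel_measurable borel"
  using borel_measurable_continuous_onI[OF assms] by measurable

lemma borel_measurable_fst_comp:
  assumes "f \<in> borel_measurable borel"
  shows "(\<lambda>p. f (fst p)) \<in> borel_measurable (borel :: ('a::topological_space \<times> 'b::topological_space) measure)"
proof -
  have "fst \<in> borel_measurable (borel :: ('a \<times> 'b) measure)"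
    by (intro borel_measurable_continuous_onI continuous_intros)
  from measurable_compose[OF this assms] show ?thesis .
qed

lemma borel_measurable_snd_comp:
  assumes "f \<in> borel_measurable borel"
  shows "(\<lambda>p. f (snd p)) \<in> borel_measurable (borel :: ('a::topological_space \<times> 'b::topological_space) measure)"
proof -
  have "snd \<in> borel_measurable (borel :: ('a \<times> 'b) measure)"
    by (intro borel_measurable_continuous_onI continuous_intros)
  from measurable_compose[OF this assms] show ?thesis .
qed

lemma ennreal_dist_triangle: "ennreal (dist x z) \<le> ennreal (dist x y) + ennreal (dist y z)"
  by (metis dist_triangle zero_le_dist ennreal_leI ennreal_plus)

lemma nn_integral_dist_P1_finite:
  assumes "\<mu> \<in> P1"
  shows "(\<integral>\<^sup>+ x. ennreal (dist y x) \<partial>\<mu>) < \<infinity>"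
proof -
  obtain x0 where int: "integrable \<mu> (\<lambda>x. dist x0 x)" using assms unfolding P1_def by auto
  interpret prob_space \<mu> using P1D[OF assms] by simp
  have "(\<integral>\<^sup>+ x. ennreal (dist x0 x) \<partial>\<mu>) < \<infinity>"
    using integrableD(2)[OF int] by (simp add: less_top)
  have meas: "(\<lambda>x. ennreal (dist x0 x)) \<in> borel_measurable \<mu>"
    unfolding measurable_P1[OF assms] by (intro borel_measurable_continuous_ennreal continuous_intros)
  have "(\<integral>\<^sup>+ x. ennreal (dist y x) \<partial>\<mu>) \<le> (\<integral>\<^sup>+ x. ennreal (dist y x0) + ennreal (dist x0 x) \<partial>\<mu>)"
    by (intro nn_integral_mono ennreal_dist_triangle)
  also have "\<dots> = ennreal (dist y x0) + (\<integral>\<^sup>+ x. ennreal (dist x0 x) \<partial>\<mu>)"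
    using meas by (simp add: nn_integral_add emeasure_space_1)
  also have "\<dots> < \<infinity>"
    using \<open>(\<integral>\<^sup>+ x. ennreal (dist x0 x) \<partial>\<mu>) < \<infinity>\<close> by simp
  finally show ?thesis .
qed

definition tail_moment :: "'a::metric_space \<Rightarrow> real \<Rightarrow> 'a measure \<Rightarrow> ennreal" where
  "tail_moment x0 R \<mu> = (\<integral>\<^sup>+ x. ennreal (dist x0 x) * indicator {x. R < dist x0 x} x \<partial>\<mu>)"

lemma tail_moment_antimono: "R \<le> R' \<Longrightarrow> tail_moment x0 R' \<mu> \<le> tail_moment x0 R \<mu>"
  unfolding tail_moment_def by (intro nn_integral_mono) (auto split: split_indicator)

lemma tail_moment_eventually_less:
  assumes "\<mu> \<in> P1" "e > 0"
  shows "eventually (\<lambda>R. tail_moment x0 R \<mu> < e) at_top"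
proof -
  define f where "f n x = ennreal (dist x0 x) * indicator {x. real n < dist x0 x} x" for n x
  have "(INF n. integral\<^sup>N \<mu> (f n)) = (\<integral>\<^sup>+ x. (INF n. f n x) \<partial>\<mu>)"
  proof (rule nn_integral_monotone_convergence_INF_decseq[symmetric])
    show "decseq f"
      unfolding f_def by (intro decseq_SucI le_funI) (auto split: split_indicator)
    show "f n \<in> borel_measurable \<mu>" for n
      unfolding f_def measurable_P1[OF assms(1)]
      by (intro borel_measurable_times_ennreal borel_measurable_continuous_ennreal
          borel_measurable_indicator borel_open open_Collect_less continuous_intros)
    show "integral\<^sup>N \<mu> (f 0) < \<infinity>"
      using nn_integral_dist_P1_finite[OF assms(1), of x0] unfolding f_def
      by (rule le_less_trans[rotated]) (intro nn_integral_mono, simp split: split_indicator)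
  qed
  also have "(\<lambda>x. INF n. f n x) = (\<lambda>x. 0)"
  proof
    fix x
    obtain n :: nat where "dist x0 x \<le> n" using real_arch_simple by blast
    then have "f n x = 0" unfolding f_def by simp
    then show "(INF n. f n x) = 0" by (metis INF_lower UNIV_I le_zero_eq)
  qed
  finally have "(INF n. integral\<^sup>N \<mu> (f n)) < e" using assms(2) by simp
  then obtain n where n: "integral\<^sup>N \<mu> (f n) < e" by (auto simp: INF_less_iff)
  have "tail_moment x0 R \<mu> < e" if "real n \<le> R" for R
  proof -
    have "tail_moment x0 R \<mu> \<le> integral\<^sup>N \<mu> (f n)"
      using tail_moment_antimono[OF that] unfolding tail_moment_def f_def .
    then show ?thesis using n by simp
  qed
  then show ?thesis unfolding eventually_at_top_linorder by blast
qed

lemma couplingsD: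
  assumes "\<pi> \<in> couplings \<mu> \<nu>"
  shows "prob_space \<pi>" "sets \<pi> = sets borel" "space \<pi> = UNIV"
    "distr \<pi> borel fst = \<mu>" "distr \<pi> borel snd = \<nu>"
  using assms unfolding couplings_def by (auto dest: sets_eq_imp_space_eq)

lemma measurable_couplings [measurable_cong]:
  "\<pi> \<in> couplings \<mu> \<nu> \<Longrightarrow> measurable \<pi> N = measurable borel N"
  using couplingsD(2) by (intro measurable_cong_sets) auto

lemma nn_integral_couplings_fst:
  assumes "\<pi> \<in> couplings \<mu> \<nu>" "f \<in> borel_measurable borel"
  shows "(\<integral>\<^sup>+ p. f (fst p) \<partial>\<pi>) = (\<integral>\<^sup>+ x. f x \<partial>\<mu>)"
proof -
  have "fst \<in> measurable \<pi> borel"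
    using assms(1) by (simp add: measurable_couplings borel_measurable_continuous_onI continuous_on_fst)
  then show ?thesis
    using assms by (subst couplingsD(4)[OF assms(1), symmetric]) (simp add: nn_integral_distr)
qed

lemma nn_integral_couplings_snd:
  assumes "\<pi> \<in> couplings \<mu> \<nu>" "f \<in> borel_measurable borel"
  shows "(\<integral>\<^sup>+ p. f (snd p) \<partial>\<pi>) = (\<integral>\<^sup>+ x. f x \<partial>\<nu>)"
proof -
  have "snd \<in> measurable \<pi> borel"
    using assms(1) by (simp add: measurable_couplings borel_measurable_continuous_onI continuous_on_snd)
  then show ?thesis
    using assms by (subst couplingsD(5)[OF assms(1), symmetric]) (simp add: nn_integral_distr)
qed

lemma integral_couplings_fst:
  fixes f :: "'a::metric_space \<Rightarrow> real"
  assumes "\<pi> \<in> couplings \<mu> \<nu>" "f \<in> borel_measurable borel"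
  shows "(\<integral>p. f (fst p) \<partial>\<pi>) = (\<integral>x. f x \<partial>\<mu>)"
proof -
  have "fst \<in> measurable \<pi> borel"
    using assms(1) by (simp add: measurable_couplings borel_measurable_continuous_onI continuous_on_fst)
  from integral_distr[OF this assms(2)] show ?thesis
    using couplingsD(4)[OF assms(1)] by simp
qed

lemma integral_couplings_snd:
  fixes f :: "'a::metric_space \<Rightarrow> real"
  assumes "\<pi> \<in> couplings \<mu> \<nu>" "f \<in> borel_measurable borel"
  shows "(\<integral>p. f (snd p) \<partial>\<pi>) = (\<integral>x. f x \<partial>\<nu>)"
proof -
  have "snd \<in> measurable \<pi> borel"
    using assms(1) by (simp add: measurable_couplings borel_measurable_continuous_onI continuous_on_snd)
  from integral_distr[OF this assms(2)] show ?thesis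
    using couplingsD(5)[OF assms(1)] by simp
qed

lemma distr_eq_of_nn_integral:
  assumes "sets M = sets borel" "sets \<mu> = sets borel" "g \<in> borel_measurable M"
    and "\<And>f. f \<in> borel_measurable borel \<Longrightarrow> (\<integral>\<^sup>+ z. f (g z) \<partial>M) = (\<integral>\<^sup>+ x. f x \<partial>\<mu>)"
  shows "distr M borel g = \<mu>"
proof (rule measure_eqI)
  fix A assume "A \<in> sets (distr M borel g)"
  then have A: "A \<in> sets borel" by simp
  then have "emeasure (distr M borel g) A = (\<integral>\<^sup>+ x. indicator A x \<partial>distr M borel g)"
    by simp
  also have "\<dots> = (\<integral>\<^sup>+ z. indicator A (g z) \<partial>M)"
    using A assms(3) by (intro nn_integral_distr) simp_all
  also have "\<dots> = emeasure \<mu> A"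
    using A assms by simp
  finally show "emeasure (distr M borel g) A = emeasure \<mu> A" .
qed (use assms in simp)

lemma couplingsI_nn_integral:
  assumes "sets \<pi> = sets borel" "\<mu> \<in> P1" "\<nu> \<in> P1"
    and "\<And>f. f \<in> borel_measurable borel \<Longrightarrow> (\<integral>\<^sup>+ p. f (fst p) \<partial>\<pi>) = (\<integral>\<^sup>+ x. f x \<partial>\<mu>)"
    and "\<And>f. f \<in> borel_measurable borel \<Longrightarrow> (\<integral>\<^sup>+ p. f (snd p) \<partial>\<pi>) = (\<integral>\<^sup>+ x. f x \<partial>\<nu>)"
  shows "\<pi> \<in> couplings \<mu> \<nu>"
proof -
  have meas: "measurable \<pi> N = measurable borel N" for N
    using assms(1) by (intro measurable_cong_sets) auto
  have "emeasure \<pi> (space \<pi>) = (\<integral>\<^sup>+ p. (\<lambda>_. 1) (fst p) \<partial>\<pi>)"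
    using assms(1) by (simp add: sets_eq_imp_space_eq)
  also have "\<dots> = 1"
    using assms(4)[of "\<lambda>_. 1"] prob_space.emeasure_space_1[OF P1D(1)[OF assms(2)]] by simp
  finally have "prob_space \<pi>" by (rule prob_spaceI)
  moreover have "distr \<pi> borel fst = \<mu>"
    by (rule distr_eq_of_nn_integral)
      (use assms P1D(2)[OF assms(2)] in \<open>simp_all add: meas borel_measurable_continuous_onI continuous_on_fst\<close>)
  moreover have "distr \<pi> borel snd = \<nu>"
    by (rule distr_eq_of_nn_integral)
      (use assms P1D(2)[OF assms(3)] in \<open>simp_all add: meas borel_measurable_continuous_onI continuous_on_snd\<close>)
  ultimately show ?thesis using assms(1) unfolding couplings_def by blast
qed

definition cost :: "('a::metric_space \<times> 'a) measure \<Rightarrow> ennreal" where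
  "cost \<pi> = (\<integral>\<^sup>+ p. ennreal (dist (fst p) (snd p)) \<partial>\<pi>)"

lemma W1_cost_def: "W1 \<mu> \<nu> = enn2real (INF \<pi> \<in> couplings \<mu> \<nu>. cost \<pi>)"
  unfolding W1_def cost_def ..

lemma W1_nonneg: "0 \<le> W1 \<mu> \<nu>"
  unfolding W1_def by simp

lemma product_coupling:
  assumes "proper_space TYPE('a::metric_space)" "\<mu> \<in> P1" "\<nu> \<in> P1"
  shows "\<mu> \<Otimes>\<^sub>M \<nu> \<in> couplings \<mu> (\<nu> :: 'a measure)" "cost (\<mu> \<Otimes>\<^sub>M \<nu>) < \<infinity>"
proof -
  interpret m: prob_space \<mu> using P1D[OF assms(2)] by simp
  interpret n: prob_space \<nu> using P1D[OF assms(3)] by simp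
  interpret pair_prob_space \<mu> \<nu> ..
  show cpl: "\<mu> \<Otimes>\<^sub>M \<nu> \<in> couplings \<mu> \<nu>"
  proof (rule couplingsI_nn_integral[OF _ assms(2,3)])
    show "sets (\<mu> \<Otimes>\<^sub>M \<nu>) = sets borel"
      using sets_pair_borel_proper[OF assms(1)] P1D(2)[OF assms(2)] P1D(2)[OF assms(3)]
      by (metis sets_pair_measure_cong)
    fix f :: "'a \<Rightarrow> ennreal" assume "f \<in> borel_measurable borel"
    then have f: "f \<in> borel_measurable \<mu>" "f \<in> borel_measurable \<nu>"
      using assms(2,3) by (simp_all add: measurable_P1)
    then have "(\<lambda>p. f (fst p)) \<in> borel_measurable (\<mu> \<Otimes>\<^sub>M \<nu>)" "(\<lambda>p. f (snd p)) \<in> borel_measurable (\<mu> \<Otimes>\<^sub>M \<nu>)"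
      by measurable
    from n.nn_integral_fst[OF this(1)] nn_integral_snd[OF this(2)]
    show "(\<integral>\<^sup>+ p. f (fst p) \<partial>(\<mu> \<Otimes>\<^sub>M \<nu>)) = (\<integral>\<^sup>+ x. f x \<partial>\<mu>)"
      "(\<integral>\<^sup>+ p. f (snd p) \<partial>(\<mu> \<Otimes>\<^sub>M \<nu>)) = (\<integral>\<^sup>+ x. f x \<partial>\<nu>)"
      by (simp_all add: m.emeasure_space_1 n.emeasure_space_1)
  qed
  fix x0 :: 'a
  have "cost (\<mu> \<Otimes>\<^sub>M \<nu>) \<le> (\<integral>\<^sup>+ p. ennreal (dist x0 (fst p)) + ennreal (dist x0 (snd p)) \<partial>(\<mu> \<Otimes>\<^sub>M \<nu>))"
    unfolding cost_def by (intro nn_integral_mono) (metis ennreal_dist_triangle dist_commute)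
  also have "\<dots> = (\<integral>\<^sup>+ p. ennreal (dist x0 (fst p)) \<partial>(\<mu> \<Otimes>\<^sub>M \<nu>)) + (\<integral>\<^sup>+ p. ennreal (dist x0 (snd p)) \<partial>(\<mu> \<Otimes>\<^sub>M \<nu>))"
  proof (rule nn_integral_add)
    show "(\<lambda>p. ennreal (dist x0 (fst p))) \<in> borel_measurable (\<mu> \<Otimes>\<^sub>M \<nu>)"
      "(\<lambda>p. ennreal (dist x0 (snd p))) \<in> borel_measurable (\<mu> \<Otimes>\<^sub>M \<nu>)"
      unfolding measurable_couplings[OF cpl] by (intro borel_measurable_continuous_ennreal continuous_intros)+
  qed
  also have "\<dots> = (\<integral>\<^sup>+ x. ennreal (dist x0 x) \<partial>\<mu>) + (\<integral>\<^sup>+ x. ennreal (dist x0 x) \<partial>\<nu>)"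
  proof -
    have "(\<lambda>x. ennreal (dist x0 x)) \<in> borel_measurable borel"
      by (intro borel_measurable_continuous_ennreal continuous_intros)
    from nn_integral_couplings_fst[OF cpl this] nn_integral_couplings_snd[OF cpl this] show ?thesis
      by simp
  qed
  also have "\<dots> < \<infinity>"
    using nn_integral_dist_P1_finite[OF assms(2)] nn_integral_dist_P1_finite[OF assms(3)] by simp
  finally show "cost (\<mu> \<Otimes>\<^sub>M \<nu>) < \<infinity>" .
qed

lemma W1_eq_INF_cost:
  assumes "proper_space TYPE('a::metric_space)" "\<mu> \<in> P1" "\<nu> \<in> P1"
  shows "ennreal (W1 \<mu> (\<nu> :: 'a measure)) = (INF \<pi> \<in> couplings \<mu> \<nu>. cost \<pi>)"
proof -
  have "(INF \<pi> \<in> couplings \<mu> \<nu>. cost \<pi>) < \<infinity>"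
    using product_coupling[OF assms] by (meson INF_lower le_less_trans)
  then show ?thesis unfolding W1_cost_def by (simp add: less_top)
qed

lemma W1_le_cost:
  assumes "proper_space TYPE('a::metric_space)" "\<mu> \<in> P1" "\<nu> \<in> P1" "\<pi> \<in> couplings \<mu> (\<nu> :: 'a measure)"
  shows "ennreal (W1 \<mu> \<nu>) \<le> cost \<pi>"
  using assms by (simp add: W1_eq_INF_cost INF_lower)

lemma W1_le_of_cost_le:
  assumes "proper_space TYPE('a::metric_space)" "\<mu> \<in> P1" "\<nu> \<in> P1" "\<pi> \<in> couplings \<mu> (\<nu> :: 'a measure)"
    and "cost \<pi> \<le> ennreal c" "0 \<le> c"
  shows "W1 \<mu> \<nu> \<le> c"
  using order_trans[OF W1_le_cost[OF assms(1-4)] assms(5)] assms(6) by simp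

lemma near_optimal_coupling:
  assumes "proper_space TYPE('a::metric_space)" "\<mu> \<in> P1" "\<nu> \<in> P1" "e > 0"
  obtains \<pi> where "\<pi> \<in> couplings \<mu> (\<nu> :: 'a measure)" "cost \<pi> < ennreal (W1 \<mu> \<nu> + e)"
proof -
  have "ennreal (W1 \<mu> \<nu>) < ennreal (W1 \<mu> \<nu> + e)"
    using assms(4) W1_nonneg[of \<mu> \<nu>] by (intro ennreal_lessI) auto
  then show ?thesis
    using that unfolding W1_eq_INF_cost[OF assms(1-3)] by (auto simp: INF_less_iff)
qed

lemma swap_coupling:
  assumes "\<pi> \<in> couplings \<mu> \<nu>" "\<mu> \<in> P1" "\<nu> \<in> P1"
  shows "distr \<pi> borel prod.swap \<in> couplings \<nu> \<mu>" "cost (distr \<pi> borel prod.swap) = cost \<pi>"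
proof -
  have swap: "prod.swap \<in> measurable \<pi> borel"
    using assms(1) by (simp add: measurable_couplings borel_measurable_continuous_onI continuous_on_swap)
  show "distr \<pi> borel prod.swap \<in> couplings \<nu> \<mu>"
  proof (rule couplingsI_nn_integral[OF _ assms(3,2)])
    fix f :: "'a \<Rightarrow> ennreal" assume f: "f \<in> borel_measurable borel"
    show "(\<integral>\<^sup>+ p. f (fst p) \<partial>distr \<pi> borel prod.swap) = (\<integral>\<^sup>+ x. f x \<partial>\<nu>)"
      using nn_integral_distr[OF swap, of "\<lambda>p. f (fst p)"] borel_measurable_fst_comp[OF f]
        nn_integral_couplings_snd[OF assms(1) f]
      by simp
    show "(\<integral>\<^sup>+ p. f (snd p) \<partial>distr \<pi> borel prod.swap) = (\<integral>\<^sup>+ x. f x \<partial>\<mu>)"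
      using nn_integral_distr[OF swap, of "\<lambda>p. f (snd p)"] borel_measurable_snd_comp[OF f]
        nn_integral_couplings_fst[OF assms(1) f]
      by simp
  qed simp
  show "cost (distr \<pi> borel prod.swap) = cost \<pi>"
  proof -
    have "(\<lambda>p. ennreal (dist (fst p) (snd p))) \<in> borel_measurable (borel :: ('a \<times> 'a) measure)"
      by (intro borel_measurable_continuous_ennreal continuous_intros)
    then have "cost (distr \<pi> borel prod.swap) = (\<integral>\<^sup>+ p. ennreal (dist (snd p) (fst p)) \<partial>\<pi>)"
      unfolding cost_def by (simp add: nn_integral_distr[OF swap])
    also have "\<dots> = cost \<pi>"
      unfolding cost_def by (intro nn_integral_cong) (simp add: dist_commute)
    finally show ?thesis .
  qed
qed

lemma W1_sym:
  assumes "\<mu> \<in> P1" "\<nu> \<in> P1"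
  shows "W1 \<mu> \<nu> = W1 \<nu> \<mu>"
proof -
  have le: "(INF \<pi> \<in> couplings \<nu> \<mu>. cost \<pi>) \<le> (INF \<pi> \<in> couplings \<mu> \<nu>. cost \<pi>)"
    if "\<mu> \<in> P1" "\<nu> \<in> P1" for \<mu> \<nu> :: "'a measure"
  proof (rule INF_greatest)
    fix \<pi> assume \<pi>: "\<pi> \<in> couplings \<mu> \<nu>"
    have "(INF \<pi> \<in> couplings \<nu> \<mu>. cost \<pi>) \<le> cost (distr \<pi> borel prod.swap)"
      by (rule INF_lower) (rule swap_coupling(1)[OF \<pi> that])
    then show "(INF \<pi> \<in> couplings \<nu> \<mu>. cost \<pi>) \<le> cost \<pi>"
      using swap_coupling(2)[OF \<pi> that] by simp
  qed
  show ?thesis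
    unfolding W1_cost_def using antisym[OF le[OF assms(2,1)] le[OF assms]] by simp
qed

section \<open>Partitions of unity and discrete plans\<close>

definition cell_partition ::
    "'a::metric_space \<Rightarrow> real \<Rightarrow> real \<Rightarrow> nat \<Rightarrow> (nat \<Rightarrow> 'a) \<Rightarrow> (nat \<Rightarrow> 'a \<Rightarrow> real) \<Rightarrow> bool" where
  "cell_partition x0 R e m b ch \<longleftrightarrow>
     (\<forall>j x. 0 \<le> ch j x) \<and> (\<forall>x. (\<Sum>j\<le>m. ch j x) = 1) \<and> (\<forall>j. continuous_on UNIV (ch j)) \<and>
     (\<forall>j\<in>{1..m}. \<forall>x. ch j x \<noteq> 0 \<longrightarrow> dist x (b j) < e) \<and> (\<forall>j\<in>{1..m}. b j \<in> cball x0 R) \<and>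
     (\<forall>x. ch 0 x \<noteq> 0 \<longrightarrow> R < dist x0 x)"

lemma cell_partitionD:
  assumes "cell_partition x0 R e m b ch"
  shows "\<And>j x. 0 \<le> ch j x" "\<And>x. (\<Sum>j\<le>m. ch j x) = 1" "\<And>j. continuous_on UNIV (ch j)"
    "\<And>j x. j \<in> {1..m} \<Longrightarrow> ch j x \<noteq> 0 \<Longrightarrow> dist x (b j) < e"
    "\<And>j. j \<in> {1..m} \<Longrightarrow> b j \<in> cball x0 R"
    "\<And>x. ch 0 x \<noteq> 0 \<Longrightarrow> R < dist x0 x"
  using assms unfolding cell_partition_def by auto

lemma cell_partition_le_1:
  assumes "cell_partition x0 R e m b ch" "j \<le> m"
  shows "ch j x \<le> 1"
  using member_le_sum[of j "{..m}" "\<lambda>j. ch j x"] cell_partitionD(1,2)[OF assms(1)] assms(2) by simp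

lemma cell_partition_measurable:
  "cell_partition x0 R e m b ch \<Longrightarrow> ch j \<in> borel_measurable borel"
  using cell_partitionD(3) borel_measurable_continuous_onI by blast

lemma cell_partition_exists:
  assumes "proper_space TYPE('a::metric_space)" "e > 0"
  obtains m b ch where "cell_partition (x0::'a) R e m b ch"
proof -
  have "compact (cball x0 R)" using assms(1) unfolding proper_space_def by blast
  moreover have "cball x0 R \<subseteq> (\<Union>x\<in>cball x0 R. ball x e)" using assms(2) by force
  ultimately obtain k where k: "k \<subseteq> cball x0 R" "finite k" "cball x0 R \<subseteq> (\<Union>x\<in>k. ball x e)"
    by (metis compactE_image open_ball)
  obtain bs where bs: "set bs = k" using finite_list[OF k(2)] by blast
  define m where "m = length bs"
  define b where "b j = bs ! (j - 1)" for j
  define \<psi> where "\<psi> j x = (if j = 0 then max 0 (dist x0 x - R) else max 0 (e - dist x (b j)))" for j x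
  define S where "S x = (\<Sum>j\<le>m. \<psi> j x)" for x
  have \<psi>_nonneg: "0 \<le> \<psi> j x" for j x unfolding \<psi>_def by auto
  have S_pos: "S x > 0" for x
  proof -
    have "\<exists>j\<le>m. \<psi> j x > 0"
    proof (cases "R < dist x0 x")
      case True then show ?thesis by (intro exI[of _ 0]) (auto simp: \<psi>_def)
    next
      case False
      then obtain y where "y \<in> k" "dist y x < e" using k(3) by force
      then obtain i where "i < length bs" "bs ! i = y" using bs by (metis in_set_conv_nth)
      with \<open>dist y x < e\<close> show ?thesis
        by (intro exI[of _ "Suc i"]) (auto simp: \<psi>_def b_def m_def dist_commute)
    qed
    then obtain j where "j \<le> m" "\<psi> j x > 0" by blast
    moreover from this have "\<psi> j x \<le> S x" unfolding S_def using \<psi>_nonneg by (intro member_le_sum) auto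
    ultimately show ?thesis by linarith
  qed
  define ch where "ch j x = \<psi> j x / S x" for j x
  have "cell_partition x0 R e m b ch"
    unfolding cell_partition_def
  proof (intro conjI allI ballI impI)
    fix j x
    show "0 \<le> ch j x" unfolding ch_def using \<psi>_nonneg S_pos[of x] by simp
    show "(\<Sum>j\<le>m. ch j x) = 1"
      unfolding ch_def using S_pos[of x] by (simp add: sum_divide_distrib[symmetric] S_def)
    have "continuous_on UNIV (\<psi> j)" for j
      unfolding \<psi>_def by (cases "j = 0") (auto intro!: continuous_intros)
    then show "continuous_on UNIV (ch j)"
      unfolding ch_def using S_pos unfolding S_def by (intro continuous_intros) (auto, metis less_irrefl)
    show "R < dist x0 x" if "ch 0 x \<noteq> 0" using that unfolding ch_def \<psi>_def by auto
  next
    fix j x assume "j \<in> {1..m}" "ch j x \<noteq> 0"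
    then show "dist x (b j) < e" unfolding ch_def \<psi>_def by (auto split: if_splits)
  next
    fix j :: nat assume "j \<in> {1..m}"
    then have "j - 1 < length bs" unfolding m_def by auto
    then have "b j \<in> k" unfolding b_def using bs nth_mem by blast
    then show "b j \<in> cball x0 R" using k(1) by blast
  qed
  then show thesis by (rule that)
qed

definition discrete_plan :: "'j set \<Rightarrow> 'i set \<Rightarrow> ('j \<Rightarrow> real) \<Rightarrow> ('i \<Rightarrow> real) \<Rightarrow> ('j \<Rightarrow> 'i \<Rightarrow> real) \<Rightarrow> bool" where
  "discrete_plan J I q p \<gamma> \<longleftrightarrow> (\<forall>j\<in>J. \<forall>i\<in>I. 0 \<le> \<gamma> j i) \<and>
     (\<forall>j\<in>J. (\<Sum>i\<in>I. \<gamma> j i) = q j) \<and> (\<forall>i\<in>I. (\<Sum>j\<in>J. \<gamma> j i) = p i)"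

lemma discrete_planD:
  assumes "discrete_plan J I q p \<gamma>"
  shows "\<And>j i. j \<in> J \<Longrightarrow> i \<in> I \<Longrightarrow> 0 \<le> \<gamma> j i" "\<And>j. j \<in> J \<Longrightarrow> (\<Sum>i\<in>I. \<gamma> j i) = q j"
    "\<And>i. i \<in> I \<Longrightarrow> (\<Sum>j\<in>J. \<gamma> j i) = p i"
  using assms unfolding discrete_plan_def by auto

lemma discrete_plan_le_marginals:
  assumes "discrete_plan J I q p \<gamma>" "finite J" "finite I" "j \<in> J" "i \<in> I"
  shows "\<gamma> j i \<le> q j" "\<gamma> j i \<le> p i"
proof -
  note \<gamma> = discrete_planD[OF assms(1)]
  show "\<gamma> j i \<le> q j"
    using member_le_sum[of i I "\<gamma> j"] \<gamma>(1,2) assms(3-5) by auto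
  show "\<gamma> j i \<le> p i"
    using member_le_sum[of j J "\<lambda>j. \<gamma> j i"] \<gamma>(1,3) assms(2,4,5) by auto
qed

lemma discrete_plan_completion:
  fixes g c :: "'j \<Rightarrow> 'i \<Rightarrow> real"
  assumes fin: "finite J" "finite I" and g: "\<And>j i. j \<in> J \<Longrightarrow> i \<in> I \<Longrightarrow> 0 \<le> g j i"
    and rows: "\<And>j. j \<in> J \<Longrightarrow> (\<Sum>i\<in>I. g j i) \<le> q j"
    and cols: "\<And>i. i \<in> I \<Longrightarrow> (\<Sum>j\<in>J. g j i) \<le> p i"
    and mass: "(\<Sum>j\<in>J. q j) = (\<Sum>i\<in>I. p i)"
    and c: "\<And>j i. j \<in> J \<Longrightarrow> i \<in> I \<Longrightarrow> c j i \<le> C"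
  defines "r j \<equiv> q j - (\<Sum>i\<in>I. g j i)" and "s i \<equiv> p i - (\<Sum>j\<in>J. g j i)" and "\<delta> \<equiv> (\<Sum>i\<in>I. p i - (\<Sum>j\<in>J. g j i))"
  shows "discrete_plan J I q p (\<lambda>j i. g j i + r j * s i / \<delta>)"
    and "(\<Sum>j\<in>J. \<Sum>i\<in>I. (g j i + r j * s i / \<delta>) * c j i) \<le> (\<Sum>j\<in>J. \<Sum>i\<in>I. g j i * c j i) + C * \<delta>"
proof -
  have \<delta>_def': "\<delta> = (\<Sum>i\<in>I. s i)" unfolding \<delta>_def s_def ..
  have r: "0 \<le> r j" if "j \<in> J" for j using rows[OF that] unfolding r_def by simp
  have s: "0 \<le> s i" if "i \<in> I" for i using cols[OF that] unfolding s_def by simp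
  have "(\<Sum>j\<in>J. r j) = (\<Sum>j\<in>J. q j) - (\<Sum>i\<in>I. \<Sum>j\<in>J. g j i)"
    unfolding r_def by (simp add: sum_subtractf sum.swap[of _ J])
  then have sum_r: "(\<Sum>j\<in>J. r j) = \<delta>"
    unfolding \<delta>_def using mass by (simp add: sum_subtractf)
  have \<delta>: "0 \<le> \<delta>" unfolding \<delta>_def' using s by (simp add: sum_nonneg)
  have r0: "r j = 0" if "\<delta> = 0" "j \<in> J" for j
    using that r sum_r fin by (simp add: sum_nonneg_eq_0_iff)
  have s0: "s i = 0" if "\<delta> = 0" "i \<in> I" for i
    using that s fin unfolding \<delta>_def' by (simp add: sum_nonneg_eq_0_iff)
  show "discrete_plan J I q p (\<lambda>j i. g j i + r j * s i / \<delta>)"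
    unfolding discrete_plan_def
  proof (intro conjI ballI)
    show "0 \<le> g j i + r j * s i / \<delta>" if "j \<in> J" "i \<in> I" for j i
      using g[OF that] r[OF that(1)] s[OF that(2)] \<delta> by simp
    show "(\<Sum>i\<in>I. g j i + r j * s i / \<delta>) = q j" if "j \<in> J" for j
      using r0[OF _ that] unfolding r_def
      by (cases "\<delta> = 0") (simp_all add: sum.distrib sum_distrib_left[symmetric] sum_divide_distrib[symmetric] \<delta>_def'[symmetric])
    show "(\<Sum>j\<in>J. g j i + r j * s i / \<delta>) = p i" if "i \<in> I" for i
      using s0[OF _ that] unfolding s_def
      by (cases "\<delta> = 0") (simp_all add: sum.distrib sum_distrib_right[symmetric] sum_divide_distrib[symmetric] sum_r)
  qed
  have "(\<Sum>j\<in>J. \<Sum>i\<in>I. r j * s i / \<delta> * c j i) \<le> (\<Sum>j\<in>J. \<Sum>i\<in>I. r j * s i / \<delta> * C)"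
    using r s \<delta> c by (intro sum_mono mult_left_mono) auto
  also have "\<dots> = C * ((\<Sum>j\<in>J. r j) * (\<Sum>i\<in>I. s i) / \<delta>)"
    by (simp add: sum_product sum_distrib_left sum_divide_distrib ac_simps)
  also have "\<dots> = C * \<delta>"
    unfolding sum_r \<delta>_def'[symmetric] by (cases "\<delta> = 0") simp_all
  finally show "(\<Sum>j\<in>J. \<Sum>i\<in>I. (g j i + r j * s i / \<delta>) * c j i) \<le> (\<Sum>j\<in>J. \<Sum>i\<in>I. g j i * c j i) + C * \<delta>"
    by (simp add: distrib_right sum.distrib)
qed

text \<open>Shrink each column to \<open>min (p' i) (p i)\<close>, then complete.\<close>
lemma discrete_plan_change_marginal:
  fixes \<gamma> c :: "'j \<Rightarrow> 'i \<Rightarrow> real"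
  assumes fin: "finite J" "finite I" and plan: "discrete_plan J I q p' \<gamma>"
    and p: "\<And>i. i \<in> I \<Longrightarrow> 0 \<le> p i" and mass: "(\<Sum>i\<in>I. p i) = (\<Sum>i\<in>I. p' i)"
    and c: "\<And>j i. j \<in> J \<Longrightarrow> i \<in> I \<Longrightarrow> 0 \<le> c j i" "\<And>j i. j \<in> J \<Longrightarrow> i \<in> I \<Longrightarrow> c j i \<le> C"
    and C: "0 \<le> C"
  obtains \<gamma>' where "discrete_plan J I q p \<gamma>'"
    "(\<Sum>j\<in>J. \<Sum>i\<in>I. \<gamma>' j i * c j i) \<le> (\<Sum>j\<in>J. \<Sum>i\<in>I. \<gamma> j i * c j i) + C * (\<Sum>i\<in>I. \<bar>p i - p' i\<bar>)"
proof -
  note \<gamma> = discrete_planD[OF plan]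
  have p': "0 \<le> p' i" if "i \<in> I" for i
    using \<gamma>(3)[OF that] \<gamma>(1)[OF _ that] by (metis sum_nonneg)
  define t where "t i = (if p' i = 0 then 0 else min 1 (p i / p' i))" for i
  define g where "g j i = \<gamma> j i * t i" for j i
  have t: "0 \<le> t i" "t i \<le> 1" if "i \<in> I" for i
    unfolding t_def using p[OF that] p'[OF that] by auto
  have g: "0 \<le> g j i" "g j i \<le> \<gamma> j i" if "j \<in> J" "i \<in> I" for j i
    unfolding g_def using \<gamma>(1)[OF that] t[OF that(2)] by (auto simp: mult_left_le)
  have g_col: "(\<Sum>j\<in>J. g j i) = min (p' i) (p i)" if "i \<in> I" for i
    using \<gamma>(3)[OF that] p[OF that] p'[OF that]
    by (auto simp: g_def t_def sum_distrib_right[symmetric] min_def field_simps)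
  have rows: "(\<Sum>i\<in>I. g j i) \<le> q j" if "j \<in> J" for j
    using \<gamma>(2)[OF that] g[OF that] by (metis sum_mono)
  have "(\<Sum>j\<in>J. q j) = (\<Sum>j\<in>J. \<Sum>i\<in>I. \<gamma> j i)"
    using \<gamma>(2) by (intro sum.cong) auto
  also have "\<dots> = (\<Sum>i\<in>I. p' i)"
    using \<gamma>(3) by (subst sum.swap) (intro sum.cong, auto)
  finally have mass': "(\<Sum>j\<in>J. q j) = (\<Sum>i\<in>I. p i)" using mass by simp
  have cols: "(\<Sum>j\<in>J. g j i) \<le> p i" if "i \<in> I" for i
    using g_col[OF that] by simp
  have "(\<Sum>i\<in>I. p i - (\<Sum>j\<in>J. g j i)) \<le> (\<Sum>i\<in>I. \<bar>p i - p' i\<bar>)"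
    using g_col by (intro sum_mono) auto
  then have deficit: "C * (\<Sum>i\<in>I. p i - (\<Sum>j\<in>J. g j i)) \<le> C * (\<Sum>i\<in>I. \<bar>p i - p' i\<bar>)"
    using C by (rule mult_left_mono)
  have shrink: "(\<Sum>j\<in>J. \<Sum>i\<in>I. g j i * c j i) \<le> (\<Sum>j\<in>J. \<Sum>i\<in>I. \<gamma> j i * c j i)"
    using g c(1) by (intro sum_mono mult_right_mono) auto
  note completion = discrete_plan_completion[where g=g and c=c and C=C, OF fin g(1) rows cols mass' c(2)]
  show thesis
    using that[OF completion(1)] completion(2) shrink deficit by linarith
qed

section \<open>Couplings built from discrete plans\<close>

lemma nn_integral_pair_prod:
  assumes "sigma_finite_measure M" "sigma_finite_measure N"
    and "f \<in> borel_measurable M" "g \<in> borel_measurable N"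
  shows "(\<integral>\<^sup>+ z. f (fst z) * g (snd z) \<partial>(M \<Otimes>\<^sub>M N)) = (\<integral>\<^sup>+ x. f x \<partial>M) * (\<integral>\<^sup>+ y. g y \<partial>N)"
proof -
  interpret M: sigma_finite_measure M by fact
  interpret N: sigma_finite_measure N by fact
  interpret pair_sigma_finite M N ..
  have "(\<integral>\<^sup>+ z. f (fst z) * g (snd z) \<partial>(M \<Otimes>\<^sub>M N)) = (\<integral>\<^sup>+ x. \<integral>\<^sup>+ y. f x * g y \<partial>N \<partial>M)"
    using assms(3,4) by (subst N.nn_integral_fst[symmetric]) auto
  also have "\<dots> = (\<integral>\<^sup>+ x. f x * (\<integral>\<^sup>+ y. g y \<partial>N) \<partial>M)"
    using assms(4) by (simp add: nn_integral_cmult)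
  finally show ?thesis
    using assms(3) by (simp add: nn_integral_multc)
qed

lemma nn_integral_mult_eq_0:
  assumes "(\<integral>\<^sup>+ x. f x \<partial>M) = 0" "f \<in> borel_measurable M"
  shows "(\<integral>\<^sup>+ x. h x * f x \<partial>M) = 0"
proof -
  have "AE x in M. f x = 0" using assms by (simp add: nn_integral_0_iff_AE)
  then have "AE x in M. h x * f x = 0" by eventually_elim simp
  then have "(\<integral>\<^sup>+ x. h x * f x \<partial>M) = (\<integral>\<^sup>+ x. 0 \<partial>M)" by (rule nn_integral_cong_AE)
  then show ?thesis by simp
qed

text \<open>A discrete plan \<open>\<gamma>\<close> between the cell masses of \<open>M\<close> and \<open>N\<close> is turned into the coupling
  with density \<open>plan_density\<close>: on block \<open>(j, i)\<close> it is the product of the two normalised cell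
  measures, weighted by \<open>\<gamma> j i\<close>.\<close>
locale cell_plan =
  M: prob_space M + N: prob_space N
  for M :: "'a measure" and N :: "'b measure" +
  fixes J :: "'j set" and I :: "'i set"
    and f :: "'j \<Rightarrow> 'a \<Rightarrow> real" and g :: "'i \<Rightarrow> 'b \<Rightarrow> real" and \<gamma> :: "'j \<Rightarrow> 'i \<Rightarrow> real"
  assumes finite_J: "finite J" and finite_I: "finite I"
    and f_measurable: "\<And>j. j \<in> J \<Longrightarrow> f j \<in> borel_measurable M"
    and g_measurable: "\<And>i. i \<in> I \<Longrightarrow> g i \<in> borel_measurable N"
    and f_nonneg: "\<And>j x. j \<in> J \<Longrightarrow> 0 \<le> f j x" and g_nonneg: "\<And>i y. i \<in> I \<Longrightarrow> 0 \<le> g i y"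
    and f_sum: "\<And>x. (\<Sum>j\<in>J. f j x) = 1" and g_sum: "\<And>y. (\<Sum>i\<in>I. g i y) = 1"
    and plan: "discrete_plan J I (\<lambda>j. \<integral>x. f j x \<partial>M) (\<lambda>i. \<integral>y. g i y \<partial>N) \<gamma>"
begin

abbreviation "q j \<equiv> \<integral>x. f j x \<partial>M"
abbreviation "p i \<equiv> \<integral>y. g i y \<partial>N"

text \<open>Division by a vanishing cell mass yields \<open>0\<close>, which is harmless: then \<open>\<gamma> j i = 0\<close> as well.\<close>
definition weight :: "'j \<Rightarrow> 'i \<Rightarrow> real" where
  "weight j i = \<gamma> j i / (q j * p i)"

definition plan_density :: "'a \<times> 'b \<Rightarrow> ennreal" where
  "plan_density z = (\<Sum>j\<in>J. \<Sum>i\<in>I. ennreal (weight j i) * (ennreal (f j (fst z)) * ennreal (g i (snd z))))"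

lemma f_le_1: "j \<in> J \<Longrightarrow> f j x \<le> 1"
  using member_le_sum[of j J "\<lambda>j. f j x"] f_nonneg f_sum finite_J by auto

lemma g_le_1: "i \<in> I \<Longrightarrow> g i y \<le> 1"
  using member_le_sum[of i I "\<lambda>i. g i y"] g_nonneg g_sum finite_I by auto

lemma nn_integral_f: "j \<in> J \<Longrightarrow> (\<integral>\<^sup>+ x. ennreal (f j x) \<partial>M) = ennreal (q j)"
  using f_measurable f_nonneg f_le_1
  by (intro nn_integral_eq_integral M.integrable_const_bound[where B=1]) auto

lemma nn_integral_g: "i \<in> I \<Longrightarrow> (\<integral>\<^sup>+ y. ennreal (g i y) \<partial>N) = ennreal (p i)"
  using g_measurable g_nonneg g_le_1
  by (intro nn_integral_eq_integral N.integrable_const_bound[where B=1]) auto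

lemma q_nonneg: "j \<in> J \<Longrightarrow> 0 \<le> q j"
  using f_nonneg by (simp add: integral_nonneg)

lemma p_nonneg: "i \<in> I \<Longrightarrow> 0 \<le> p i"
  using g_nonneg by (simp add: integral_nonneg)

lemma weight_nonneg: "j \<in> J \<Longrightarrow> i \<in> I \<Longrightarrow> 0 \<le> weight j i"
  using discrete_planD(1)[OF plan] q_nonneg p_nonneg unfolding weight_def by simp

lemma plan_bounds:
  assumes "j \<in> J" "i \<in> I"
  shows "0 \<le> \<gamma> j i" "\<gamma> j i \<le> q j" "\<gamma> j i \<le> p i"
  using discrete_plan_le_marginals[OF plan finite_J finite_I assms] discrete_planD(1)[OF plan assms]
  by auto

lemma weight_mult_masses:
  assumes "j \<in> J" "i \<in> I"
  shows "weight j i * (q j * p i) = \<gamma> j i"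
  using plan_bounds[OF assms] unfolding weight_def by (cases "q j = 0 \<or> p i = 0") auto

lemma sum_weight_row:
  assumes "j \<in> J"
  shows "(\<Sum>i\<in>I. weight j i * p i) = (if q j = 0 then 0 else 1)"
proof -
  have "weight j i * p i = \<gamma> j i / q j" if "i \<in> I" for i
    using plan_bounds[OF assms that] unfolding weight_def by (cases "p i = 0") auto
  then have "(\<Sum>i\<in>I. weight j i * p i) = (\<Sum>i\<in>I. \<gamma> j i) / q j"
    by (simp add: sum_divide_distrib)
  then show ?thesis using discrete_planD(2)[OF plan assms] by simp
qed

lemma sum_weight_col:
  assumes "i \<in> I"
  shows "(\<Sum>j\<in>J. weight j i * q j) = (if p i = 0 then 0 else 1)"
proof -
  have "weight j i * q j = \<gamma> j i / p i" if "j \<in> J" for j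
    using plan_bounds[OF that assms] unfolding weight_def by (cases "q j = 0") auto
  then have "(\<Sum>j\<in>J. weight j i * q j) = (\<Sum>j\<in>J. \<gamma> j i) / p i"
    by (simp add: sum_divide_distrib)
  then show ?thesis using discrete_planD(3)[OF plan assms] by simp
qed

lemma ennreal_f_measurable: "j \<in> J \<Longrightarrow> (\<lambda>x. ennreal (f j x)) \<in> borel_measurable M"
  using f_measurable by measurable

lemma ennreal_g_measurable: "i \<in> I \<Longrightarrow> (\<lambda>y. ennreal (g i y)) \<in> borel_measurable N"
  using g_measurable by measurable

lemma measurable_cells:
  "j \<in> J \<Longrightarrow> (\<lambda>z. ennreal (f j (fst z))) \<in> borel_measurable (M \<Otimes>\<^sub>M N)"
  "i \<in> I \<Longrightarrow> (\<lambda>z. ennreal (g i (snd z))) \<in> borel_measurable (M \<Otimes>\<^sub>M N)"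
  using f_measurable g_measurable by measurable

lemma plan_density_measurable: "plan_density \<in> borel_measurable (M \<Otimes>\<^sub>M N)"
  unfolding plan_density_def using measurable_cells
  by (intro borel_measurable_sum borel_measurable_times_ennreal borel_measurable_const) auto

lemma nn_integral_cell_pair:
  assumes "j \<in> J" "i \<in> I" "u \<in> borel_measurable M" "v \<in> borel_measurable N"
  shows "(\<integral>\<^sup>+ z. (ennreal (f j (fst z)) * u (fst z)) * (ennreal (g i (snd z)) * v (snd z)) \<partial>(M \<Otimes>\<^sub>M N)) =
    (\<integral>\<^sup>+ x. ennreal (f j x) * u x \<partial>M) * (\<integral>\<^sup>+ y. ennreal (g i y) * v y \<partial>N)"
  using assms ennreal_f_measurable[OF assms(1)] ennreal_g_measurable[OF assms(2)]
  by (intro nn_integral_pair_prod[OF M.sigma_finite_measure_axioms N.sigma_finite_measure_axioms]) auto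

lemma cell_pair_measurable:
  assumes "j \<in> J" "i \<in> I" "u \<in> borel_measurable M" "v \<in> borel_measurable N"
  shows "(\<lambda>z. (ennreal (f j (fst z)) * u (fst z)) * (ennreal (g i (snd z)) * v (snd z))) \<in> borel_measurable (M \<Otimes>\<^sub>M N)"
  using assms ennreal_f_measurable[OF assms(1)] ennreal_g_measurable[OF assms(2)] by measurable

definition weighted_cells ::
    "('j \<Rightarrow> 'i \<Rightarrow> 'a \<Rightarrow> ennreal) \<Rightarrow> ('j \<Rightarrow> 'i \<Rightarrow> 'b \<Rightarrow> ennreal) \<Rightarrow> 'a \<times> 'b \<Rightarrow> ennreal" where
  "weighted_cells u v z = (\<Sum>j\<in>J. \<Sum>i\<in>I. ennreal (weight j i) *
      ((ennreal (f j (fst z)) * u j i (fst z)) * (ennreal (g i (snd z)) * v j i (snd z))))"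

lemma weighted_cell_measurable:
  assumes "j \<in> J" "i \<in> I" "u j i \<in> borel_measurable M" "v j i \<in> borel_measurable N"
  shows "(\<lambda>z. ennreal (weight j i) * ((ennreal (f j (fst z)) * u j i (fst z)) * (ennreal (g i (snd z)) * v j i (snd z))))
      \<in> borel_measurable (M \<Otimes>\<^sub>M N)"
  using cell_pair_measurable[OF assms] by measurable

lemma weighted_cells_measurable:
  assumes "\<And>j i. j \<in> J \<Longrightarrow> i \<in> I \<Longrightarrow> u j i \<in> borel_measurable M"
    and "\<And>j i. j \<in> J \<Longrightarrow> i \<in> I \<Longrightarrow> v j i \<in> borel_measurable N"
  shows "weighted_cells u v \<in> borel_measurable (M \<Otimes>\<^sub>M N)"
  unfolding weighted_cells_def using weighted_cell_measurable assms by (intro borel_measurable_sum) auto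

lemma nn_integral_weighted_cells:
  assumes "\<And>j i. j \<in> J \<Longrightarrow> i \<in> I \<Longrightarrow> u j i \<in> borel_measurable M"
    and "\<And>j i. j \<in> J \<Longrightarrow> i \<in> I \<Longrightarrow> v j i \<in> borel_measurable N"
  shows "integral\<^sup>N (M \<Otimes>\<^sub>M N) (weighted_cells u v) = (\<Sum>j\<in>J. \<Sum>i\<in>I. ennreal (weight j i) *
      ((\<integral>\<^sup>+ x. ennreal (f j x) * u j i x \<partial>M) * (\<integral>\<^sup>+ y. ennreal (g i y) * v j i y \<partial>N)))"
proof -
  have cell: "\<And>j i. j \<in> J \<Longrightarrow> i \<in> I \<Longrightarrow> (\<lambda>z. ennreal (weight j i) * ((ennreal (f j (fst z)) * u j i (fst z)) * (ennreal (g i (snd z)) * v j i (snd z))))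
      \<in> borel_measurable (M \<Otimes>\<^sub>M N)"
    using weighted_cell_measurable assms by blast
  then have "(\<lambda>z. \<Sum>i\<in>I. ennreal (weight j i) * ((ennreal (f j (fst z)) * u j i (fst z)) * (ennreal (g i (snd z)) * v j i (snd z))))
      \<in> borel_measurable (M \<Otimes>\<^sub>M N)" if "j \<in> J" for j
    using that by (intro borel_measurable_sum) auto
  with cell show ?thesis
    unfolding weighted_cells_def
    using assms by (simp add: nn_integral_sum nn_integral_cmult cell_pair_measurable nn_integral_cell_pair)
qed

lemma sum_weighted_rows:
  "(\<Sum>j\<in>J. \<Sum>i\<in>I. ennreal (weight j i) * (A j * ennreal (p i))) = (\<Sum>j\<in>J. if q j = 0 then 0 else A j)"
proof (intro sum.cong refl)
  fix j assume j: "j \<in> J"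
  have "(\<Sum>i\<in>I. ennreal (weight j i) * (A j * ennreal (p i))) = A j * (\<Sum>i\<in>I. ennreal (weight j i * p i))"
    using weight_nonneg[OF j] p_nonneg by (simp add: sum_distrib_left ennreal_mult ac_simps)
  also have "\<dots> = A j * ennreal (\<Sum>i\<in>I. weight j i * p i)"
    using weight_nonneg[OF j] p_nonneg by (simp add: sum_ennreal)
  finally show "(\<Sum>i\<in>I. ennreal (weight j i) * (A j * ennreal (p i))) = (if q j = 0 then 0 else A j)"
    using sum_weight_row[OF j] by simp
qed

lemma sum_weighted_cols:
  "(\<Sum>j\<in>J. \<Sum>i\<in>I. ennreal (weight j i) * (ennreal (q j) * B i)) = (\<Sum>i\<in>I. if p i = 0 then 0 else B i)"
proof -
  have "(\<Sum>i\<in>I. \<Sum>j\<in>J. ennreal (weight j i) * (ennreal (q j) * B i)) = (\<Sum>i\<in>I. if p i = 0 then 0 else B i)"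
  proof (intro sum.cong refl)
    fix i assume i: "i \<in> I"
    have "(\<Sum>j\<in>J. ennreal (weight j i) * (ennreal (q j) * B i)) = B i * (\<Sum>j\<in>J. ennreal (weight j i * q j))"
      using weight_nonneg[OF _ i] q_nonneg by (simp add: sum_distrib_left ennreal_mult ac_simps)
    also have "\<dots> = B i * ennreal (\<Sum>j\<in>J. weight j i * q j)"
      using weight_nonneg[OF _ i] q_nonneg by (simp add: sum_ennreal)
    finally show "(\<Sum>j\<in>J. ennreal (weight j i) * (ennreal (q j) * B i)) = (if p i = 0 then 0 else B i)"
      using sum_weight_col[OF i] by simp
  qed
  then show ?thesis by (subst sum.swap)
qed

lemma nn_integral_plan_density_fst:
  assumes h: "h \<in> borel_measurable M"
  shows "(\<integral>\<^sup>+ z. plan_density z * h (fst z) \<partial>(M \<Otimes>\<^sub>M N)) = (\<integral>\<^sup>+ x. h x \<partial>M)"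
proof -
  define A where "A j = (\<integral>\<^sup>+ x. ennreal (f j x) * h x \<partial>M)" for j
  have A0: "A j = 0" if "j \<in> J" "q j = 0" for j
    using nn_integral_mult_eq_0[where f="\<lambda>x. ennreal (f j x)" and M=M and h=h] nn_integral_f[OF that(1)] that(2)
      f_measurable[OF that(1)] unfolding A_def by (simp add: mult.commute)
  have "(\<integral>\<^sup>+ z. plan_density z * h (fst z) \<partial>(M \<Otimes>\<^sub>M N)) =
      integral\<^sup>N (M \<Otimes>\<^sub>M N) (weighted_cells (\<lambda>_ _. h) (\<lambda>_ _ _. 1))"
    unfolding plan_density_def weighted_cells_def sum_distrib_right
    by (intro nn_integral_cong sum.cong refl) (simp add: ac_simps)
  also have "\<dots> = (\<Sum>j\<in>J. \<Sum>i\<in>I. ennreal (weight j i) * (A j * ennreal (p i)))"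
    using h by (subst nn_integral_weighted_cells) (auto simp: A_def nn_integral_g)
  also have "\<dots> = (\<Sum>j\<in>J. A j)"
    unfolding sum_weighted_rows using A0 by (intro sum.cong) auto
  also have "\<dots> = (\<integral>\<^sup>+ x. (\<Sum>j\<in>J. ennreal (f j x)) * h x \<partial>M)"
    unfolding A_def using h ennreal_f_measurable by (simp add: nn_integral_sum sum_distrib_right)
  also have "\<dots> = (\<integral>\<^sup>+ x. h x \<partial>M)"
    using f_nonneg f_sum by (simp add: sum_ennreal)
  finally show ?thesis .
qed

lemma nn_integral_plan_density_snd:
  assumes h: "h \<in> borel_measurable N"
  shows "(\<integral>\<^sup>+ z. plan_density z * h (snd z) \<partial>(M \<Otimes>\<^sub>M N)) = (\<integral>\<^sup>+ y. h y \<partial>N)"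
proof -
  define B where "B i = (\<integral>\<^sup>+ y. ennreal (g i y) * h y \<partial>N)" for i
  have B0: "B i = 0" if "i \<in> I" "p i = 0" for i
    using nn_integral_mult_eq_0[where f="\<lambda>y. ennreal (g i y)" and M=N and h=h] nn_integral_g[OF that(1)] that(2)
      g_measurable[OF that(1)] unfolding B_def by (simp add: mult.commute)
  have "(\<integral>\<^sup>+ z. plan_density z * h (snd z) \<partial>(M \<Otimes>\<^sub>M N)) =
      integral\<^sup>N (M \<Otimes>\<^sub>M N) (weighted_cells (\<lambda>_ _ _. 1) (\<lambda>_ _. h))"
    unfolding plan_density_def weighted_cells_def sum_distrib_right
    by (intro nn_integral_cong sum.cong refl) (simp add: ac_simps)
  also have "\<dots> = (\<Sum>j\<in>J. \<Sum>i\<in>I. ennreal (weight j i) * (ennreal (q j) * B i))"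
    using h by (subst nn_integral_weighted_cells) (auto simp: B_def nn_integral_f)
  also have "\<dots> = (\<Sum>i\<in>I. B i)"
    unfolding sum_weighted_cols using B0 by (intro sum.cong) auto
  also have "\<dots> = (\<integral>\<^sup>+ y. (\<Sum>i\<in>I. ennreal (g i y)) * h y \<partial>N)"
    unfolding B_def using h ennreal_g_measurable by (simp add: nn_integral_sum sum_distrib_right)
  also have "\<dots> = (\<integral>\<^sup>+ y. h y \<partial>N)"
    using g_nonneg g_sum by (simp add: sum_ennreal)
  finally show ?thesis .
qed

lemma plan_density_mult_le:
  fixes c :: "'a \<times> 'b \<Rightarrow> ennreal" and a :: "'j \<Rightarrow> 'a \<Rightarrow> ennreal" and b :: "'i \<Rightarrow> 'b \<Rightarrow> ennreal"
  assumes c: "\<And>j i x y. j \<in> J \<Longrightarrow> i \<in> I \<Longrightarrow> \<gamma> j i \<noteq> 0 \<Longrightarrow> f j x \<noteq> 0 \<Longrightarrow> g i y \<noteq> 0 \<Longrightarrow>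
      c (x, y) \<le> ennreal (K j i) + a j x + b i y"
  shows "plan_density z * c z \<le> weighted_cells (\<lambda>j i x. ennreal (K j i)) (\<lambda>j i x. 1) z
    + weighted_cells (\<lambda>j i. a j) (\<lambda>j i x. 1) z + weighted_cells (\<lambda>j i x. 1) (\<lambda>j i. b i) z"
proof -
  have "ennreal (weight j i) * (ennreal (f j (fst z)) * ennreal (g i (snd z)) * c z) \<le>
      ennreal (weight j i) * ((ennreal (f j (fst z)) * ennreal (K j i)) * (ennreal (g i (snd z)) * 1) +
        (ennreal (f j (fst z)) * a j (fst z)) * (ennreal (g i (snd z)) * 1) +
        (ennreal (f j (fst z)) * 1) * (ennreal (g i (snd z)) * b i (snd z)))"
    if "j \<in> J" "i \<in> I" for j i
  proof (cases "\<gamma> j i = 0 \<or> f j (fst z) = 0 \<or> g i (snd z) = 0")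
    case False
    then have "c z \<le> ennreal (K j i) + a j (fst z) + b i (snd z)"
      using c[OF that, of "fst z" "snd z"] by simp
    then have "ennreal (f j (fst z)) * ennreal (g i (snd z)) * c z \<le>
        ennreal (f j (fst z)) * ennreal (g i (snd z)) * (ennreal (K j i) + a j (fst z) + b i (snd z))"
      by (rule mult_left_mono) simp
    also have "\<dots> = (ennreal (f j (fst z)) * ennreal (K j i)) * (ennreal (g i (snd z)) * 1) +
        (ennreal (f j (fst z)) * a j (fst z)) * (ennreal (g i (snd z)) * 1) +
        (ennreal (f j (fst z)) * 1) * (ennreal (g i (snd z)) * b i (snd z))"
      by (simp add: algebra_simps)
    finally show ?thesis by (rule mult_left_mono) simp
  qed (auto simp: weight_def)
  then show ?thesis
    unfolding weighted_cells_def plan_density_def sum_distrib_right sum.distrib[symmetric] distrib_left[symmetric]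
    by (intro sum_mono) (simp add: ac_simps)
qed

lemma nn_integral_plan_density_le:
  fixes c :: "'a \<times> 'b \<Rightarrow> ennreal" and a :: "'j \<Rightarrow> 'a \<Rightarrow> ennreal" and b :: "'i \<Rightarrow> 'b \<Rightarrow> ennreal"
  assumes a: "\<And>j. j \<in> J \<Longrightarrow> a j \<in> borel_measurable M" and b: "\<And>i. i \<in> I \<Longrightarrow> b i \<in> borel_measurable N"
    and K: "\<And>j i. j \<in> J \<Longrightarrow> i \<in> I \<Longrightarrow> 0 \<le> K j i"
    and c: "\<And>j i x y. j \<in> J \<Longrightarrow> i \<in> I \<Longrightarrow> \<gamma> j i \<noteq> 0 \<Longrightarrow> f j x \<noteq> 0 \<Longrightarrow> g i y \<noteq> 0 \<Longrightarrow>
      c (x, y) \<le> ennreal (K j i) + a j x + b i y"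
  shows "(\<integral>\<^sup>+ z. plan_density z * c z \<partial>(M \<Otimes>\<^sub>M N)) \<le> ennreal (\<Sum>j\<in>J. \<Sum>i\<in>I. \<gamma> j i * K j i)
    + (\<Sum>j\<in>J. \<integral>\<^sup>+ x. ennreal (f j x) * a j x \<partial>M) + (\<Sum>i\<in>I. \<integral>\<^sup>+ y. ennreal (g i y) * b i y \<partial>N)"
proof -
  let ?K = "\<lambda>j i x. ennreal (K j i)" and ?a = "\<lambda>j i. a j" and ?b = "\<lambda>j i. b i" and ?one = "\<lambda>j i x. 1"
  have "\<And>z. plan_density z * c z \<le> weighted_cells ?K ?one z + weighted_cells ?a ?one z + weighted_cells ?one ?b z"
    using plan_density_mult_le[where c=c and K=K and a=a and b=b, OF c] by blast
  then have "(\<integral>\<^sup>+ z. plan_density z * c z \<partial>(M \<Otimes>\<^sub>M N)) \<le> (\<integral>\<^sup>+ z. weighted_cells ?K ?one z + weighted_cells ?a ?one z + weighted_cells ?one ?b z \<partial>(M \<Otimes>\<^sub>M N))"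
    by (rule nn_integral_mono)
  also have "\<dots> = integral\<^sup>N (M \<Otimes>\<^sub>M N) (weighted_cells ?K ?one) + integral\<^sup>N (M \<Otimes>\<^sub>M N) (weighted_cells ?a ?one)
      + integral\<^sup>N (M \<Otimes>\<^sub>M N) (weighted_cells ?one ?b)"
    using a b by (simp add: nn_integral_add borel_measurable_add weighted_cells_measurable)
  also have "integral\<^sup>N (M \<Otimes>\<^sub>M N) (weighted_cells ?K ?one) = (\<Sum>j\<in>J. \<Sum>i\<in>I. ennreal (weight j i * (q j * p i) * K j i))"
  proof -
    have "(\<integral>\<^sup>+ x. ennreal (f j x) * ennreal (K j i) \<partial>M) = ennreal (q j) * ennreal (K j i)" if "j \<in> J" for j i
      using that by (simp add: nn_integral_multc ennreal_f_measurable nn_integral_f)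
    moreover have "ennreal (weight j i) * (ennreal (q j) * ennreal (K j i) * ennreal (p i)) =
        ennreal (weight j i * (q j * p i) * K j i)" if "j \<in> J" "i \<in> I" for j i
      using K[OF that] weight_nonneg[OF that] q_nonneg[OF that(1)] p_nonneg[OF that(2)]
      by (simp add: ennreal_mult mult_nonneg_nonneg ac_simps)
    ultimately show ?thesis
      by (subst nn_integral_weighted_cells) (auto simp: nn_integral_g intro!: sum.cong)
  qed
  also have "\<dots> = ennreal (\<Sum>j\<in>J. \<Sum>i\<in>I. \<gamma> j i * K j i)"
    using K plan_bounds(1) by (simp add: weight_mult_masses sum_nonneg sum_ennreal)
  also have "integral\<^sup>N (M \<Otimes>\<^sub>M N) (weighted_cells ?a ?one) = (\<Sum>j\<in>J. if q j = 0 then 0 else \<integral>\<^sup>+ x. ennreal (f j x) * a j x \<partial>M)"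
    using a by (subst nn_integral_weighted_cells) (auto simp: nn_integral_g sum_weighted_rows)
  also have "\<dots> \<le> (\<Sum>j\<in>J. \<integral>\<^sup>+ x. ennreal (f j x) * a j x \<partial>M)"
    by (intro sum_mono) auto
  also have "integral\<^sup>N (M \<Otimes>\<^sub>M N) (weighted_cells ?one ?b) = (\<Sum>i\<in>I. if p i = 0 then 0 else \<integral>\<^sup>+ y. ennreal (g i y) * b i y \<partial>N)"
    using b by (subst nn_integral_weighted_cells) (auto simp: nn_integral_f sum_weighted_cols)
  also have "\<dots> \<le> (\<Sum>i\<in>I. \<integral>\<^sup>+ y. ennreal (g i y) * b i y \<partial>N)"
    by (intro sum_mono) auto
  finally show ?thesis by (simp add: add_mono)
qed

end

section \<open>The triangle inequality\<close>

lemma cell_partition_tail_le: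
  assumes "cell_partition x0 R e m b ch"
  shows "(\<integral>\<^sup>+ y. ennreal (ch 0 y) * ennreal (dist x0 y) \<partial>\<mu>) \<le> tail_moment x0 R \<mu>"
  unfolding tail_moment_def
proof (intro nn_integral_mono)
  fix y
  show "ennreal (ch 0 y) * ennreal (dist x0 y) \<le> ennreal (dist x0 y) * indicator {y. R < dist x0 y} y"
    using cell_partitionD(6)[OF assms, of y] cell_partition_le_1[OF assms, of 0 y]
    by (cases "ch 0 y = 0") (auto simp: mult_left_le ennreal_le_1 mult.commute)
qed

definition cell_slack :: "'a::metric_space \<Rightarrow> real \<Rightarrow> nat \<Rightarrow> 'a \<Rightarrow> ennreal" where
  "cell_slack x0 \<delta> k y = ennreal \<delta> + (if k = 0 then ennreal (2 * dist x0 y) else 0)"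

lemma cell_slack_measurable: "cell_slack x0 \<delta> k \<in> borel_measurable borel"
  unfolding cell_slack_def
  by (cases "k = 0") (auto intro!: borel_measurable_add borel_measurable_continuous_ennreal continuous_intros)

lemma dist_le_cell_slack:
  assumes "cell_partition x0 R \<delta> m b ch" "k \<le> m" "ch k y \<noteq> 0" "ch k y' \<noteq> 0"
  shows "ennreal (dist y y') \<le> cell_slack x0 \<delta> k y + cell_slack x0 \<delta> k y'"
proof (cases "k = 0")
  case True
  have "dist y y' \<le> 2 * dist x0 y + 2 * dist x0 y'"
    using dist_triangle3[of y y' x0] zero_le_dist[of x0 y] zero_le_dist[of x0 y'] by linarith
  then have "ennreal (dist y y') \<le> ennreal (2 * dist x0 y) + ennreal (2 * dist x0 y')"
    by (simp add: ennreal_plus[symmetric] del: ennreal_plus)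
  also have "\<dots> \<le> cell_slack x0 \<delta> k y + cell_slack x0 \<delta> k y'"
    unfolding cell_slack_def using True by (intro add_mono add_increasing) simp_all
  finally show ?thesis .
next
  case False
  with assms have "dist y (b k) < \<delta>" "dist y' (b k) < \<delta>"
    using cell_partitionD(4)[OF assms(1)] by auto
  then have "dist y y' \<le> \<delta> + \<delta>"
    using dist_triangle3[of y y' "b k"] by (simp add: dist_commute)
  moreover have "0 \<le> \<delta>" using \<open>dist y (b k) < \<delta>\<close> zero_le_dist[of y "b k"] by linarith
  ultimately show ?thesis
    using False by (simp add: cell_slack_def ennreal_plus[symmetric] del: ennreal_plus)
qed

lemma sum_nn_integral_cell_slack:
  assumes "cell_partition x0 R \<delta> m b ch" "\<mu> \<in> P1"
  shows "(\<Sum>k\<le>m. \<integral>\<^sup>+ y. ennreal (ch k y) * cell_slack x0 \<delta> k y \<partial>\<mu>) \<le> ennreal \<delta> + 2 * tail_moment x0 R \<mu>"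
proof -
  note ch = cell_partitionD[OF assms(1)]
  have "(\<Sum>k\<le>m. \<integral>\<^sup>+ y. ennreal (ch k y) * cell_slack x0 \<delta> k y \<partial>\<mu>) =
      (\<integral>\<^sup>+ y. (\<Sum>k\<le>m. ennreal (ch k y) * cell_slack x0 \<delta> k y) \<partial>\<mu>)"
  proof (rule nn_integral_sum[symmetric])
    fix k
    show "(\<lambda>y. ennreal (ch k y) * cell_slack x0 \<delta> k y) \<in> borel_measurable \<mu>"
      using cell_partition_measurable[OF assms(1), of k] cell_slack_measurable[of x0 \<delta> k] assms(2)
      by (simp add: measurable_P1)
  qed
  also have "\<dots> = (\<integral>\<^sup>+ y. ennreal \<delta> + 2 * (ennreal (ch 0 y) * ennreal (dist x0 y)) \<partial>\<mu>)"
  proof (intro nn_integral_cong)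
    fix y
    have "(\<Sum>k\<le>m. ennreal (ch k y) * cell_slack x0 \<delta> k y) =
        (\<Sum>k\<le>m. ennreal (ch k y)) * ennreal \<delta> + (\<Sum>k\<le>m. if k = 0 then ennreal (ch k y) * ennreal (2 * dist x0 y) else 0)"
      unfolding cell_slack_def distrib_left sum.distrib sum_distrib_right by (intro arg_cong2[where f="(+)"] sum.cong) auto
    also have "(\<Sum>k\<le>m. if k = 0 then ennreal (ch k y) * ennreal (2 * dist x0 y) else 0) = ennreal (ch 0 y) * ennreal (2 * dist x0 y)"
      by (simp add: sum.delta)
    also have "(\<Sum>k\<le>m. ennreal (ch k y)) = 1"
      using ch(1,2) by (simp add: sum_ennreal)
    finally show "(\<Sum>k\<le>m. ennreal (ch k y) * cell_slack x0 \<delta> k y) = ennreal \<delta> + 2 * (ennreal (ch 0 y) * ennreal (dist x0 y))"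
      by (simp add: ennreal_mult ac_simps)
  qed
  also have "\<dots> = ennreal \<delta> + 2 * (\<integral>\<^sup>+ y. ennreal (ch 0 y) * ennreal (dist x0 y) \<partial>\<mu>)"
  proof -
    have "(\<lambda>y. ennreal (ch 0 y) * ennreal (dist x0 y)) \<in> borel_measurable \<mu>"
      unfolding measurable_P1[OF assms(2)] using cell_partition_measurable[OF assms(1), of 0]
        borel_measurable_continuous_onI[OF continuous_on_dist[OF continuous_on_const continuous_on_id]]
      by measurable
    then show ?thesis
      using prob_space.emeasure_space_1[OF P1D(1)[OF assms(2)]] by (simp add: nn_integral_add nn_integral_cmult)
  qed
  also have "\<dots> \<le> ennreal \<delta> + 2 * tail_moment x0 R \<mu>"
    using cell_partition_tail_le[OF assms(1)] by (intro add_left_mono mult_left_mono) auto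
  finally show ?thesis .
qed

text \<open>Approximate gluing of two couplings along their common marginal \<open>\<nu>\<close>: instead of
  disintegrating, cut \<open>\<nu>\<close> into the cells of a partition of unity and couple the two
  couplings independently within each cell.\<close>
locale gluing =
  fixes \<mu> \<nu> \<rho> :: "'a::metric_space measure" and \<pi>1 \<pi>2 :: "('a \<times> 'a) measure"
    and x0 :: 'a and R \<delta> :: real and m :: nat and b :: "nat \<Rightarrow> 'a" and ch :: "nat \<Rightarrow> 'a \<Rightarrow> real"
  assumes proper: "proper_space TYPE('a)" and P1: "\<mu> \<in> P1" "\<nu> \<in> P1" "\<rho> \<in> P1"
    and \<pi>1: "\<pi>1 \<in> couplings \<mu> \<nu>" and \<pi>2: "\<pi>2 \<in> couplings \<nu> \<rho>"
    and part: "cell_partition x0 R \<delta> m b ch"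
begin

lemma ch_measurable: "ch k \<in> borel_measurable borel"
  using cell_partition_measurable[OF part] .

sublocale cp: cell_plan \<pi>1 \<pi>2 "{..m}" "{..m}" "\<lambda>k p. ch k (snd p)" "\<lambda>k q. ch k (fst q)"
  "\<lambda>j i. if j = i then \<integral>y. ch j y \<partial>\<nu> else 0"
proof (intro cell_plan.intro cell_plan_axioms.intro)
  show "prob_space \<pi>1" "prob_space \<pi>2" using couplingsD(1)[OF \<pi>1] couplingsD(1)[OF \<pi>2] .
  show "(\<lambda>p. ch k (snd p)) \<in> borel_measurable \<pi>1" "(\<lambda>q. ch k (fst q)) \<in> borel_measurable \<pi>2" for k
    unfolding measurable_couplings[OF \<pi>1] measurable_couplings[OF \<pi>2]
    using borel_measurable_snd_comp[OF ch_measurable] borel_measurable_fst_comp[OF ch_measurable] by auto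
  have "(\<integral>p. ch k (snd p) \<partial>\<pi>1) = (\<integral>y. ch k y \<partial>\<nu>)" "(\<integral>q. ch k (fst q) \<partial>\<pi>2) = (\<integral>y. ch k y \<partial>\<nu>)" for k
    using integral_couplings_snd[OF \<pi>1 ch_measurable] integral_couplings_fst[OF \<pi>2 ch_measurable] by auto
  then show "discrete_plan {..m} {..m} (\<lambda>j. \<integral>p. ch j (snd p) \<partial>\<pi>1) (\<lambda>i. \<integral>q. ch i (fst q) \<partial>\<pi>2)
      (\<lambda>j i. if j = i then \<integral>y. ch j y \<partial>\<nu> else 0)"
    unfolding discrete_plan_def using cell_partitionD(1)[OF part]
    by (simp add: integral_nonneg sum.delta sum.delta')
qed (use cell_partitionD(1,2)[OF part] in auto)

definition glued :: "('a \<times> 'a) measure" where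
  "glued = distr (density (\<pi>1 \<Otimes>\<^sub>M \<pi>2) cp.plan_density) borel (\<lambda>w. (fst (fst w), snd (snd w)))"

lemma measurable_components:
  fixes \<phi> \<psi> :: "'a \<times> 'a \<Rightarrow> 'a"
  assumes "\<phi> \<in> borel_measurable borel" "\<psi> \<in> borel_measurable borel"
  shows "(\<lambda>w. (\<phi> (fst w), \<psi> (snd w))) \<in> measurable (\<pi>1 \<Otimes>\<^sub>M \<pi>2) borel"
proof -
  have "(\<lambda>w. (\<phi> (fst w), \<psi> (snd w))) \<in> measurable (\<pi>1 \<Otimes>\<^sub>M \<pi>2) (borel \<Otimes>\<^sub>M borel)"
    by (intro measurable_Pair measurable_compose[OF measurable_fst] measurable_compose[OF measurable_snd])
      (simp_all add: measurable_couplings[OF \<pi>1] measurable_couplings[OF \<pi>2] assms)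
  then show ?thesis using sets_pair_borel_proper[OF proper] by (simp cong: measurable_cong_sets)
qed

lemma fst_snd_measurable:
  "fst \<in> borel_measurable (borel :: ('a \<times> 'a) measure)" "snd \<in> borel_measurable (borel :: ('a \<times> 'a) measure)"
  by (intro borel_measurable_continuous_onI continuous_intros)+

lemma nn_integral_glued:
  assumes "h \<in> borel_measurable borel"
  shows "(\<integral>\<^sup>+ z. h z \<partial>glued) = (\<integral>\<^sup>+ w. cp.plan_density w * h (fst (fst w), snd (snd w)) \<partial>(\<pi>1 \<Otimes>\<^sub>M \<pi>2))"
  using measurable_components[OF fst_snd_measurable] assms unfolding glued_def
  by (simp add: nn_integral_distr nn_integral_density cp.plan_density_measurable
      measurable_compose[OF measurable_components[OF fst_snd_measurable]])

lemma glued_coupling: "glued \<in> couplings \<mu> \<rho>"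
proof (rule couplingsI_nn_integral[OF _ P1(1,3)])
  fix f :: "'a \<Rightarrow> ennreal" assume f: "f \<in> borel_measurable borel"
  have "(\<lambda>p. f (fst p)) \<in> borel_measurable \<pi>1" "(\<lambda>q. f (snd q)) \<in> borel_measurable \<pi>2"
    using borel_measurable_fst_comp[OF f] borel_measurable_snd_comp[OF f]
    by (simp_all add: measurable_couplings[OF \<pi>1] measurable_couplings[OF \<pi>2])
  then show "(\<integral>\<^sup>+ z. f (fst z) \<partial>glued) = (\<integral>\<^sup>+ x. f x \<partial>\<mu>)" "(\<integral>\<^sup>+ z. f (snd z) \<partial>glued) = (\<integral>\<^sup>+ x. f x \<partial>\<rho>)"
    using cp.nn_integral_plan_density_fst[of "\<lambda>p. f (fst p)"] cp.nn_integral_plan_density_snd[of "\<lambda>q. f (snd q)"]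
      nn_integral_couplings_fst[OF \<pi>1 f] nn_integral_couplings_snd[OF \<pi>2 f] f
    by (simp_all add: nn_integral_glued borel_measurable_fst_comp borel_measurable_snd_comp)
qed (simp add: glued_def)

text \<open>The only cost of gluing: points of \<open>\<pi>1\<close> and \<open>\<pi>2\<close> are matched within a cell rather than exactly.\<close>
lemma nn_integral_cell_mismatch:
  "(\<integral>\<^sup>+ w. cp.plan_density w * ennreal (dist (snd (fst w)) (fst (snd w))) \<partial>(\<pi>1 \<Otimes>\<^sub>M \<pi>2))
    \<le> 2 * (ennreal \<delta> + 2 * tail_moment x0 R \<nu>)"
proof -
  define S where "S = (\<Sum>k\<le>m. \<integral>\<^sup>+ y. ennreal (ch k y) * cell_slack x0 \<delta> k y \<partial>\<nu>)"
  have slack: "(\<lambda>y. ennreal (ch k y) * cell_slack x0 \<delta> k y) \<in> borel_measurable borel" for k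
    using ch_measurable[of k] cell_slack_measurable[of x0 \<delta> k] by measurable
  have "(\<integral>\<^sup>+ w. cp.plan_density w * ennreal (dist (snd (fst w)) (fst (snd w))) \<partial>(\<pi>1 \<Otimes>\<^sub>M \<pi>2))
      \<le> ennreal (\<Sum>j\<le>m. \<Sum>i\<le>m. (if j = i then \<integral>y. ch j y \<partial>\<nu> else 0) * 0)
        + (\<Sum>k\<le>m. \<integral>\<^sup>+ p. ennreal (ch k (snd p)) * cell_slack x0 \<delta> k (snd p) \<partial>\<pi>1)
        + (\<Sum>k\<le>m. \<integral>\<^sup>+ q. ennreal (ch k (fst q)) * cell_slack x0 \<delta> k (fst q) \<partial>\<pi>2)"
  proof (rule cp.nn_integral_plan_density_le)
    show "(\<lambda>p. cell_slack x0 \<delta> k (snd p)) \<in> borel_measurable \<pi>1"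
      "(\<lambda>q. cell_slack x0 \<delta> k (fst q)) \<in> borel_measurable \<pi>2" for k
      using borel_measurable_snd_comp[OF cell_slack_measurable] borel_measurable_fst_comp[OF cell_slack_measurable]
      by (simp_all add: measurable_couplings[OF \<pi>1] measurable_couplings[OF \<pi>2])
    fix j i :: nat and p q :: "'a \<times> 'a"
    assume "j \<in> {..m}" "i \<in> {..m}" "(if j = i then \<integral>y. ch j y \<partial>\<nu> else 0) \<noteq> 0"
      "ch j (snd p) \<noteq> 0" "ch i (fst q) \<noteq> 0"
    then show "ennreal (dist (snd (fst (p, q))) (fst (snd (p, q)))) \<le>
        ennreal 0 + cell_slack x0 \<delta> j (snd p) + cell_slack x0 \<delta> i (fst q)"
      using dist_le_cell_slack[OF part] by (auto split: if_splits)
  qed simp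
  also have "\<dots> = S + S"
    unfolding S_def using nn_integral_couplings_snd[OF \<pi>1 slack] nn_integral_couplings_fst[OF \<pi>2 slack] by simp
  also have "\<dots> = 2 * S" by (simp add: mult_2)
  also have "\<dots> \<le> 2 * (ennreal \<delta> + 2 * tail_moment x0 R \<nu>)"
    using sum_nn_integral_cell_slack[OF part P1(2)] unfolding S_def by (rule mult_left_mono) simp
  finally show ?thesis .
qed

lemma cost_glued_le: "cost glued \<le> cost \<pi>1 + cost \<pi>2 + 2 * (ennreal \<delta> + 2 * tail_moment x0 R \<nu>)"
proof -
  define d where "d p = ennreal (dist (fst p) (snd p))" for p :: "'a \<times> 'a"
  define c where "c w = ennreal (dist (snd (fst w)) (fst (snd w)))" for w :: "('a \<times> 'a) \<times> ('a \<times> 'a)"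
  note D = cp.plan_density_measurable
  have d: "d \<in> borel_measurable borel" "d \<in> borel_measurable \<pi>1" "d \<in> borel_measurable \<pi>2"
    unfolding d_def measurable_couplings[OF \<pi>1] measurable_couplings[OF \<pi>2]
    by (intro borel_measurable_continuous_ennreal continuous_intros)+
  have c: "c \<in> borel_measurable (\<pi>1 \<Otimes>\<^sub>M \<pi>2)"
    using measurable_compose[OF measurable_components[OF fst_snd_measurable(2,1)] d(1)]
    unfolding c_def d_def by simp
  have "cost glued = (\<integral>\<^sup>+ w. cp.plan_density w * ennreal (dist (fst (fst w)) (snd (snd w))) \<partial>(\<pi>1 \<Otimes>\<^sub>M \<pi>2))"
    using nn_integral_glued[OF d(1)] unfolding cost_def d_def by simp
  also have "\<dots> \<le> (\<integral>\<^sup>+ w. cp.plan_density w * d (fst w) + cp.plan_density w * c w + cp.plan_density w * d (snd w)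
      \<partial>(\<pi>1 \<Otimes>\<^sub>M \<pi>2))"
  proof (intro nn_integral_mono)
    fix w :: "('a \<times> 'a) \<times> ('a \<times> 'a)"
    have "ennreal (dist (fst (fst w)) (snd (snd w))) \<le> d (fst w) + ennreal (dist (snd (fst w)) (snd (snd w)))"
      unfolding d_def by (rule ennreal_dist_triangle)
    also have "\<dots> \<le> d (fst w) + (c w + d (snd w))"
      unfolding c_def d_def by (intro add_left_mono ennreal_dist_triangle)
    finally show "cp.plan_density w * ennreal (dist (fst (fst w)) (snd (snd w))) \<le>
        cp.plan_density w * d (fst w) + cp.plan_density w * c w + cp.plan_density w * d (snd w)"
      using mult_left_mono by (fastforce simp: distrib_left add.assoc)
  qed
  also have "\<dots> = (\<integral>\<^sup>+ w. cp.plan_density w * d (fst w) \<partial>(\<pi>1 \<Otimes>\<^sub>M \<pi>2))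
      + (\<integral>\<^sup>+ w. cp.plan_density w * c w \<partial>(\<pi>1 \<Otimes>\<^sub>M \<pi>2)) + (\<integral>\<^sup>+ w. cp.plan_density w * d (snd w) \<partial>(\<pi>1 \<Otimes>\<^sub>M \<pi>2))"
  proof -
    have "(\<lambda>w. cp.plan_density w * d (fst w)) \<in> borel_measurable (\<pi>1 \<Otimes>\<^sub>M \<pi>2)"
      "(\<lambda>w. cp.plan_density w * c w) \<in> borel_measurable (\<pi>1 \<Otimes>\<^sub>M \<pi>2)"
      "(\<lambda>w. cp.plan_density w * d (snd w)) \<in> borel_measurable (\<pi>1 \<Otimes>\<^sub>M \<pi>2)"
      using D c d(2,3) by measurable
    then show ?thesis by (simp add: nn_integral_add borel_measurable_add)
  qed
  also have "(\<integral>\<^sup>+ w. cp.plan_density w * d (fst w) \<partial>(\<pi>1 \<Otimes>\<^sub>M \<pi>2)) = cost \<pi>1"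
    using cp.nn_integral_plan_density_fst[OF d(2)] unfolding cost_def d_def by simp
  also have "(\<integral>\<^sup>+ w. cp.plan_density w * d (snd w) \<partial>(\<pi>1 \<Otimes>\<^sub>M \<pi>2)) = cost \<pi>2"
    using cp.nn_integral_plan_density_snd[OF d(3)] unfolding cost_def d_def by simp
  also have "(\<integral>\<^sup>+ w. cp.plan_density w * c w \<partial>(\<pi>1 \<Otimes>\<^sub>M \<pi>2)) \<le> 2 * (ennreal \<delta> + 2 * tail_moment x0 R \<nu>)"
    using nn_integral_cell_mismatch unfolding c_def .
  finally show ?thesis by (simp add: add_mono ac_simps)
qed

end

lemma W1_triangle:
  fixes \<mu> \<nu> \<rho> :: "'a::metric_space measure"
  assumes P: "proper_space TYPE('a)" and P1: "\<mu> \<in> P1" "\<nu> \<in> P1" "\<rho> \<in> P1"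
  shows "W1 \<mu> \<rho> \<le> W1 \<mu> \<nu> + W1 \<nu> \<rho>"
proof (rule field_le_epsilon)
  fix e :: real assume "e > 0"
  define \<delta> where "\<delta> = e / 8"
  have \<delta>: "\<delta> > 0" using \<open>e > 0\<close> unfolding \<delta>_def by simp
  fix x0 :: 'a
  obtain R where R: "tail_moment x0 R \<nu> < ennreal \<delta>"
    using tail_moment_eventually_less[OF P1(2), of "ennreal \<delta>" x0] \<delta> by (auto simp: eventually_at_top_linorder)
  obtain m b ch where part: "cell_partition x0 R \<delta> m b ch"
    using cell_partition_exists[OF P \<delta>] by blast
  obtain \<pi>1 where near1: "\<pi>1 \<in> couplings \<mu> \<nu>" "cost \<pi>1 < ennreal (W1 \<mu> \<nu> + \<delta>)"
    using near_optimal_coupling[OF P P1(1,2) \<delta>] by blast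
  obtain \<pi>2 where near2: "\<pi>2 \<in> couplings \<nu> \<rho>" "cost \<pi>2 < ennreal (W1 \<nu> \<rho> + \<delta>)"
    using near_optimal_coupling[OF P P1(2,3) \<delta>] by blast
  interpret gluing \<mu> \<nu> \<rho> \<pi>1 \<pi>2 x0 R \<delta> m b ch
    using P P1 near1(1) near2(1) part by unfold_locales
  define \<sigma> where "\<sigma> = glued"
  have \<sigma>: "\<sigma> \<in> couplings \<mu> \<rho>"
    "cost \<sigma> \<le> cost \<pi>1 + cost \<pi>2 + 2 * (ennreal \<delta> + 2 * tail_moment x0 R \<nu>)"
    unfolding \<sigma>_def by (rule glued_coupling cost_glued_le)+
  have "cost \<sigma> \<le> ennreal (W1 \<mu> \<nu> + \<delta>) + ennreal (W1 \<nu> \<rho> + \<delta>) + 2 * (ennreal \<delta> + 2 * ennreal \<delta>)"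
    using \<sigma>(2) near1(2) near2(2) R
    by (meson add_mono less_imp_le mult_left_mono order_trans order_refl zero_le)
  also have "2 * (ennreal \<delta> + 2 * ennreal \<delta>) = ennreal (6 * \<delta>)"
    using \<delta> by (simp add: ennreal_mult distrib_left mult.assoc[symmetric] flip: distrib_right)
  also have "ennreal (W1 \<mu> \<nu> + \<delta>) + ennreal (W1 \<nu> \<rho> + \<delta>) + ennreal (6 * \<delta>) = ennreal (W1 \<mu> \<nu> + W1 \<nu> \<rho> + e)"
    using \<delta> W1_nonneg[of \<mu> \<nu>] W1_nonneg[of \<nu> \<rho>] unfolding \<delta>_def
    by (simp add: ennreal_plus[symmetric] del: ennreal_plus)
  finally show "W1 \<mu> \<rho> \<le> W1 \<mu> \<nu> + W1 \<nu> \<rho> + e"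
    using W1_le_of_cost_le[OF P P1(1,3) \<sigma>(1)] W1_nonneg[of \<mu> \<nu>] W1_nonneg[of \<nu> \<rho>] \<open>e > 0\<close> by simp
qed

lemma W1_lipschitz:
  fixes \<mu> \<nu> \<nu>' :: "'a::metric_space measure"
  assumes P: "proper_space TYPE('a)" and "\<mu> \<in> P1" "\<nu> \<in> P1" "\<nu>' \<in> P1"
  shows "\<bar>W1 \<nu>' \<mu> - W1 \<nu> \<mu>\<bar> \<le> W1 \<nu>' \<nu>"
  using W1_triangle[OF P assms(4,3,2)] W1_triangle[OF P assms(3,4,2)] W1_sym[OF assms(3,4)] by linarith

section \<open>Lower semicontinuity under narrow convergence\<close>

definition center_dist :: "(nat \<Rightarrow> 'a::metric_space) \<Rightarrow> nat \<Rightarrow> nat \<Rightarrow> real" where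
  "center_dist b j i = (if 0 < j \<and> 0 < i then dist (b j) (b i) else 0)"

lemma center_dist_nonneg: "0 \<le> center_dist b j i"
  unfolding center_dist_def by simp

lemma center_dist_le:
  assumes "cell_partition x0 R \<delta> m b ch" "j \<le> m" "i \<le> m" "0 \<le> R"
  shows "center_dist b j i \<le> 2 * R"
  using cell_partitionD(5)[OF assms(1), of j] cell_partitionD(5)[OF assms(1), of i] assms(2-4)
    dist_triangle3[of "b j" "b i" x0]
  unfolding center_dist_def by auto

lemma center_dist_le_dist:
  assumes "cell_partition x0 R \<delta> m b ch" "j \<le> m" "i \<le> m" "ch j x \<noteq> 0" "ch i y \<noteq> 0" "0 \<le> \<delta>"
  shows "center_dist b j i \<le> dist x y + 2 * \<delta>"
proof (cases "0 < j \<and> 0 < i")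
  case True
  then have "dist x (b j) < \<delta>" "dist y (b i) < \<delta>"
    using cell_partitionD(4)[OF assms(1)] assms(2-5) by auto
  moreover have "dist (b j) (b i) \<le> dist x (b j) + dist x y + dist y (b i)"
    using dist_triangle[of "b j" "b i" x] dist_triangle[of x "b i" y] by (simp add: dist_commute)
  ultimately show ?thesis using True unfolding center_dist_def by simp
qed (use assms(6) in \<open>auto simp: center_dist_def\<close>)

lemma dist_le_center_dist:
  assumes "cell_partition x0 R \<delta> m b ch" "j \<le> m" "i \<le> m" "ch j x \<noteq> 0" "ch i y \<noteq> 0"
  shows "ennreal (dist x y) \<le> ennreal (center_dist b j i) + cell_slack x0 \<delta> j x + cell_slack x0 \<delta> i y"
proof -
  note ch = cell_partitionD[OF assms(1)]
  define t where "t k z = (if k = 0 then 2 * dist x0 z else \<delta>)" for k :: nat and z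
  have cell: "dist z (b k) < \<delta>" "dist x0 (b k) \<le> R" if "k \<le> m" "k \<noteq> 0" "ch k z \<noteq> 0" for k z
    using ch(4,5) that by auto
  have tail: "R < dist x0 z" if "ch 0 z \<noteq> 0" for z
    using ch(6) that by auto
  have t: "0 \<le> t j x" "0 \<le> t i y"
    using cell(1)[OF assms(2) _ assms(4)] cell(1)[OF assms(3) _ assms(5)]
    unfolding t_def by (auto intro: order_trans[OF zero_le_dist less_imp_le])
  have "dist x y \<le> center_dist b j i + t j x + t i y"
  proof (cases "j = 0"; cases "i = 0")
    assume "j = 0" "i = 0"
    then have "t j x = 2 * dist x0 x" "t i y = 2 * dist x0 y" "center_dist b j i = 0"
      by (simp_all add: t_def center_dist_def)
    moreover have "0 \<le> dist x0 x" "0 \<le> dist x0 y" by simp_all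
    ultimately show ?thesis using dist_triangle3[of x y x0] by linarith
  next
    assume "j = 0" "i \<noteq> 0"
    then show ?thesis
      using tail[of x] cell[OF assms(3) _ assms(5)] assms(4) dist_triangle[of x y x0] dist_triangle[of x0 y "b i"]
      unfolding t_def center_dist_def by (auto simp: dist_commute)
  next
    assume "j \<noteq> 0" "i = 0"
    then show ?thesis
      using tail[of y] cell[OF assms(2) _ assms(4)] assms(5) dist_triangle[of x y x0] dist_triangle[of x0 x "b j"]
      unfolding t_def center_dist_def by (auto simp: dist_commute)
  next
    assume "j \<noteq> 0" "i \<noteq> 0"
    then show ?thesis
      using cell[OF assms(2) _ assms(4)] cell[OF assms(3) _ assms(5)]
        dist_triangle[of x y "b j"] dist_triangle[of "b j" y "b i"]
      unfolding t_def center_dist_def by (auto simp: dist_commute)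
  qed
  then have "ennreal (dist x y) \<le> ennreal (center_dist b j i) + ennreal (t j x) + ennreal (t i y)"
    using t center_dist_nonneg[of b j i] by (simp add: ennreal_plus[symmetric] del: ennreal_plus)
  moreover have "ennreal (t k z) \<le> cell_slack x0 \<delta> k z" for k z
    unfolding t_def cell_slack_def by (auto simp: add_increasing)
  ultimately show ?thesis
    by (meson add_mono order_refl order_trans)
qed

definition cell_masses :: "(nat \<Rightarrow> 'a \<Rightarrow> real) \<Rightarrow> ('a \<times> 'a) measure \<Rightarrow> nat \<Rightarrow> nat \<Rightarrow> real" where
  "cell_masses ch \<pi> j i = (\<integral>z. ch j (fst z) * ch i (snd z) \<partial>\<pi>)"

lemma sum_cell_center_dist_le:
  assumes part: "cell_partition x0 R \<delta> m b ch" and "0 \<le> \<delta>"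
  shows "(\<Sum>j\<le>m. \<Sum>i\<le>m. ch j x * ch i y * center_dist b j i) \<le> dist x y + 2 * \<delta>"
proof -
  note ch = cell_partitionD[OF part]
  have "(\<Sum>j\<le>m. \<Sum>i\<le>m. ch j x * ch i y * center_dist b j i) \<le>
      (\<Sum>j\<le>m. \<Sum>i\<le>m. ch j x * ch i y * (dist x y + 2 * \<delta>))"
  proof (intro sum_mono)
    fix j i assume "j \<in> {..m}" "i \<in> {..m}"
    then show "ch j x * ch i y * center_dist b j i \<le> ch j x * ch i y * (dist x y + 2 * \<delta>)"
      using center_dist_le_dist[OF part, of j i x y] ch(1) \<open>0 \<le> \<delta>\<close>
      by (cases "ch j x = 0 \<or> ch i y = 0") (auto intro: mult_left_mono)
  qed
  also have "\<dots> = dist x y + 2 * \<delta>"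
    using ch(2) by (simp add: sum_distrib_right[symmetric] sum_distrib_left[symmetric])
  finally show ?thesis .
qed

lemma integrable_cell_product:
  assumes part: "cell_partition x0 R \<delta> m b ch" and \<pi>: "\<pi> \<in> couplings \<nu> \<mu>" and "j \<le> m" "i \<le> m"
  shows "integrable \<pi> (\<lambda>z. ch j (fst z) * ch i (snd z))"
proof -
  interpret prob_space \<pi> using couplingsD(1)[OF \<pi>] .
  have "(\<lambda>z. ch j (fst z) * ch i (snd z)) \<in> borel_measurable \<pi>"
    unfolding measurable_couplings[OF \<pi>] using cell_partition_measurable[OF part]
    by (intro borel_measurable_times borel_measurable_fst_comp borel_measurable_snd_comp)
  then show ?thesis
    using cell_partitionD(1)[OF part] cell_partition_le_1[OF part] assms(3,4)
    by (intro integrable_const_bound[where B=1]) (auto intro!: mult_le_one)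
qed

lemma discrete_plan_cell_masses:
  assumes part: "cell_partition x0 R \<delta> m b ch" and \<pi>: "\<pi> \<in> couplings \<nu> \<mu>"
  shows "discrete_plan {..m} {..m} (\<lambda>j. \<integral>x. ch j x \<partial>\<nu>) (\<lambda>i. \<integral>y. ch i y \<partial>\<mu>) (cell_masses ch \<pi>)"
  unfolding discrete_plan_def
proof (intro conjI ballI)
  note ch = cell_partitionD[OF part]
  note int = integrable_cell_product[OF part \<pi>]
  show "0 \<le> cell_masses ch \<pi> j i" for j i unfolding cell_masses_def using ch(1) by (simp add: integral_nonneg)
  fix j assume "j \<in> {..m}"
  then have "(\<Sum>i\<le>m. cell_masses ch \<pi> j i) = (\<integral>z. ch j (fst z) * (\<Sum>i\<le>m. ch i (snd z)) \<partial>\<pi>)"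
    unfolding cell_masses_def using int by (simp add: Bochner_Integration.integral_sum[symmetric] sum_distrib_left)
  also have "\<dots> = (\<integral>x. ch j x \<partial>\<nu>)"
    using ch(2) integral_couplings_fst[OF \<pi> cell_partition_measurable[OF part]] by simp
  finally show "(\<Sum>i\<le>m. cell_masses ch \<pi> j i) = (\<integral>x. ch j x \<partial>\<nu>)" .
next
  note ch = cell_partitionD[OF part]
  note int = integrable_cell_product[OF part \<pi>]
  fix i assume "i \<in> {..m}"
  then have "(\<Sum>j\<le>m. cell_masses ch \<pi> j i) = (\<integral>z. (\<Sum>j\<le>m. ch j (fst z)) * ch i (snd z) \<partial>\<pi>)"
    unfolding cell_masses_def using int by (simp add: Bochner_Integration.integral_sum[symmetric] sum_distrib_right)
  also have "\<dots> = (\<integral>y. ch i y \<partial>\<mu>)"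
    using ch(2) integral_couplings_snd[OF \<pi> cell_partition_measurable[OF part]] by simp
  finally show "(\<Sum>j\<le>m. cell_masses ch \<pi> j i) = (\<integral>y. ch i y \<partial>\<mu>)" .
qed

lemma cell_masses_cost_le:
  assumes part: "cell_partition x0 R \<delta> m b ch" and "0 \<le> \<delta>" and \<pi>: "\<pi> \<in> couplings \<nu> \<mu>"
  shows "ennreal (\<Sum>j\<le>m. \<Sum>i\<le>m. cell_masses ch \<pi> j i * center_dist b j i) \<le> cost \<pi> + ennreal (2 * \<delta>)"
proof -
  interpret prob_space \<pi> using couplingsD(1)[OF \<pi>] .
  note ch = cell_partitionD[OF part]
  note int = integrable_cell_product[OF part \<pi>]
  define F where "F z = (\<Sum>j\<le>m. \<Sum>i\<le>m. ch j (fst z) * ch i (snd z) * center_dist b j i)" for z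
  have cell_int: "integrable \<pi> (\<lambda>z. ch j (fst z) * ch i (snd z) * center_dist b j i)" if "j \<le> m" "i \<le> m" for j i
    using int[OF that] by simp
  then have F_int: "integrable \<pi> F"
    unfolding F_def[abs_def] by (intro Bochner_Integration.integrable_sum) auto
  have "(\<Sum>j\<le>m. \<Sum>i\<le>m. cell_masses ch \<pi> j i * center_dist b j i) =
      (\<Sum>j\<le>m. \<Sum>i\<le>m. \<integral>z. ch j (fst z) * ch i (snd z) * center_dist b j i \<partial>\<pi>)"
    unfolding cell_masses_def by simp
  also have "\<dots> = (\<Sum>j\<le>m. \<integral>z. (\<Sum>i\<le>m. ch j (fst z) * ch i (snd z) * center_dist b j i) \<partial>\<pi>)"
    using cell_int by (intro sum.cong refl Bochner_Integration.integral_sum[symmetric]) auto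
  also have "\<dots> = (\<integral>z. F z \<partial>\<pi>)"
    unfolding F_def using cell_int
    by (intro Bochner_Integration.integral_sum[symmetric] Bochner_Integration.integrable_sum) auto
  finally have "(\<Sum>j\<le>m. \<Sum>i\<le>m. cell_masses ch \<pi> j i * center_dist b j i) = (\<integral>z. F z \<partial>\<pi>)" .
  moreover have "0 \<le> F z" for z
    unfolding F_def using ch(1) center_dist_nonneg by (intro sum_nonneg mult_nonneg_nonneg) auto
  ultimately have "ennreal (\<Sum>j\<le>m. \<Sum>i\<le>m. cell_masses ch \<pi> j i * center_dist b j i) = (\<integral>\<^sup>+ z. ennreal (F z) \<partial>\<pi>)"
    using nn_integral_eq_integral[OF F_int] by simp
  also have "\<dots> \<le> (\<integral>\<^sup>+ z. ennreal (dist (fst z) (snd z)) + ennreal (2 * \<delta>) \<partial>\<pi>)"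
  proof (intro nn_integral_mono)
    fix z :: "'a \<times> 'a"
    have "F z \<le> dist (fst z) (snd z) + 2 * \<delta>"
      unfolding F_def by (rule sum_cell_center_dist_le[OF part \<open>0 \<le> \<delta>\<close>])
    then show "ennreal (F z) \<le> ennreal (dist (fst z) (snd z)) + ennreal (2 * \<delta>)"
      using \<open>0 \<le> \<delta>\<close> by (simp add: ennreal_plus[symmetric] ennreal_leI del: ennreal_plus)
  qed
  also have "\<dots> = cost \<pi> + ennreal (2 * \<delta>)"
    unfolding cost_def measurable_couplings[OF \<pi>]
    by (subst nn_integral_add) (auto simp: measurable_couplings[OF \<pi>] emeasure_space_1
        intro!: borel_measurable_continuous_ennreal borel_measurable_continuous_onI continuous_intros)
  finally show "ennreal (\<Sum>j\<le>m. \<Sum>i\<le>m. cell_masses ch \<pi> j i * center_dist b j i) \<le> cost \<pi> + ennreal (2 * \<delta>)" .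
qed

lemma coupling_of_discrete_plan:
  fixes \<nu> \<mu> :: "'a::metric_space measure"
  assumes P: "proper_space TYPE('a)" and P1: "\<nu> \<in> P1" "\<mu> \<in> P1"
    and part: "cell_partition x0 R \<delta> m b ch"
    and plan: "discrete_plan {..m} {..m} (\<lambda>j. \<integral>x. ch j x \<partial>\<nu>) (\<lambda>i. \<integral>y. ch i y \<partial>\<mu>) \<gamma>"
  obtains \<pi> where "\<pi> \<in> couplings \<nu> \<mu>"
    "cost \<pi> \<le> ennreal (\<Sum>j\<le>m. \<Sum>i\<le>m. \<gamma> j i * center_dist b j i)
      + (ennreal \<delta> + 2 * tail_moment x0 R \<nu>) + (ennreal \<delta> + 2 * tail_moment x0 R \<mu>)"
proof -
  note ch = cell_partitionD[OF part]
  have "ch k \<in> borel_measurable \<nu>" "ch k \<in> borel_measurable \<mu>" for k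
    using cell_partition_measurable[OF part] P1 by (simp_all add: measurable_P1)
  then interpret cp: cell_plan \<nu> \<mu> "{..m}" "{..m}" ch ch \<gamma>
    using P1D(1)[OF P1(1)] P1D(1)[OF P1(2)] ch(1,2) plan
    by (intro cell_plan.intro cell_plan_axioms.intro) auto
  define \<pi> where "\<pi> = density (\<nu> \<Otimes>\<^sub>M \<mu>) cp.plan_density"
  have sets: "sets (\<nu> \<Otimes>\<^sub>M \<mu>) = sets borel"
    using sets_pair_measure_cong[OF P1D(2)[OF P1(1)] P1D(2)[OF P1(2)]] sets_pair_borel_proper[OF P] by simp
  have nn_integral_\<pi>: "(\<integral>\<^sup>+ z. h z \<partial>\<pi>) = (\<integral>\<^sup>+ z. cp.plan_density z * h z \<partial>(\<nu> \<Otimes>\<^sub>M \<mu>))"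
    if "h \<in> borel_measurable borel" for h
    using that cp.plan_density_measurable unfolding \<pi>_def
    by (simp add: nn_integral_density measurable_cong_sets[OF sets refl])
  have "\<pi> \<in> couplings \<nu> \<mu>"
  proof (rule couplingsI_nn_integral[OF _ P1])
    fix f :: "'a \<Rightarrow> ennreal" assume f: "f \<in> borel_measurable borel"
    then have "f \<in> borel_measurable \<nu>" "f \<in> borel_measurable \<mu>"
      using P1 by (simp_all add: measurable_P1)
    then show "(\<integral>\<^sup>+ z. f (fst z) \<partial>\<pi>) = (\<integral>\<^sup>+ x. f x \<partial>\<nu>)" "(\<integral>\<^sup>+ z. f (snd z) \<partial>\<pi>) = (\<integral>\<^sup>+ x. f x \<partial>\<mu>)"
      using f by (simp_all add: nn_integral_\<pi> borel_measurable_fst_comp borel_measurable_snd_comp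
          cp.nn_integral_plan_density_fst cp.nn_integral_plan_density_snd)
  qed (simp add: \<pi>_def sets)
  moreover have "cost \<pi> \<le> ennreal (\<Sum>j\<le>m. \<Sum>i\<le>m. \<gamma> j i * center_dist b j i)
      + (ennreal \<delta> + 2 * tail_moment x0 R \<nu>) + (ennreal \<delta> + 2 * tail_moment x0 R \<mu>)"
  proof -
    have "cost \<pi> = (\<integral>\<^sup>+ z. cp.plan_density z * ennreal (dist (fst z) (snd z)) \<partial>(\<nu> \<Otimes>\<^sub>M \<mu>))"
      unfolding cost_def
      by (rule nn_integral_\<pi>) (intro borel_measurable_continuous_ennreal continuous_intros)
    also have "\<dots> \<le> ennreal (\<Sum>j\<le>m. \<Sum>i\<le>m. \<gamma> j i * center_dist b j i)
        + (\<Sum>j\<le>m. \<integral>\<^sup>+ x. ennreal (ch j x) * cell_slack x0 \<delta> j x \<partial>\<nu>)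
        + (\<Sum>i\<le>m. \<integral>\<^sup>+ y. ennreal (ch i y) * cell_slack x0 \<delta> i y \<partial>\<mu>)"
    proof (rule cp.nn_integral_plan_density_le)
      show "cell_slack x0 \<delta> k \<in> borel_measurable \<nu>" "cell_slack x0 \<delta> k \<in> borel_measurable \<mu>" for k
        using cell_slack_measurable P1 by (simp_all add: measurable_P1)
      fix j i x y assume "j \<in> {..m}" "i \<in> {..m}" "ch j x \<noteq> 0" "ch i y \<noteq> 0"
      then show "ennreal (dist (fst (x, y)) (snd (x, y))) \<le> ennreal (center_dist b j i)
          + cell_slack x0 \<delta> j x + cell_slack x0 \<delta> i y"
        using dist_le_center_dist[OF part] by simp
    qed (rule center_dist_nonneg)
    also have "\<dots> \<le> ennreal (\<Sum>j\<le>m. \<Sum>i\<le>m. \<gamma> j i * center_dist b j i)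
        + (ennreal \<delta> + 2 * tail_moment x0 R \<nu>) + (ennreal \<delta> + 2 * tail_moment x0 R \<mu>)"
      using sum_nn_integral_cell_slack[OF part P1(1)] sum_nn_integral_cell_slack[OF part P1(2)]
      by (intro add_mono) auto
    finally show ?thesis .
  qed
  ultimately show thesis by (rule that)
qed

lemma sum_integral_cell_partition:
  assumes "cell_partition x0 R \<delta> m b ch" "\<mu> \<in> P1"
  shows "(\<Sum>i\<le>m. \<integral>y. ch i y \<partial>\<mu>) = 1"
proof -
  interpret prob_space \<mu> using P1D(1)[OF assms(2)] .
  have "integrable \<mu> (ch i)" if "i \<le> m" for i
    using cell_partitionD(1)[OF assms(1)] cell_partition_le_1[OF assms(1) that] assms(2)
      cell_partition_measurable[OF assms(1)]
    by (intro integrable_const_bound[where B=1]) (auto simp: measurable_P1)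
  then have "(\<Sum>i\<le>m. \<integral>y. ch i y \<partial>\<mu>) = (\<integral>y. (\<Sum>i\<le>m. ch i y) \<partial>\<mu>)"
    by (intro Bochner_Integration.integral_sum[symmetric]) auto
  then show ?thesis using cell_partitionD(2)[OF assms(1)] prob_space by simp
qed

lemma W1_le_cell_defect:
  fixes \<nu> \<mu> \<mu>' :: "'a::metric_space measure"
  assumes P: "proper_space TYPE('a)" and P1: "\<nu> \<in> P1" "\<mu> \<in> P1" "\<mu>' \<in> P1"
    and part: "cell_partition x0 R \<delta> m b ch" and "0 < \<delta>" "0 \<le> R"
    and tails: "tail_moment x0 R \<nu> \<le> ennreal \<delta>" "tail_moment x0 R \<mu> \<le> ennreal \<delta>"
  shows "W1 \<nu> \<mu> \<le> W1 \<nu> \<mu>' + 2 * R * (\<Sum>i\<le>m. \<bar>(\<integral>y. ch i y \<partial>\<mu>) - (\<integral>y. ch i y \<partial>\<mu>')\<bar>) + 9 * \<delta>"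
proof -
  obtain \<pi> where \<pi>: "\<pi> \<in> couplings \<nu> \<mu>'" "cost \<pi> < ennreal (W1 \<nu> \<mu>' + \<delta>)"
    using near_optimal_coupling[OF P P1(1,3) \<open>0 < \<delta>\<close>] by blast
  define \<gamma> where "\<gamma> = cell_masses ch \<pi>"
  note discretized = discrete_plan_cell_masses[OF part \<pi>(1), folded \<gamma>_def]
    cell_masses_cost_le[OF part less_imp_le[OF \<open>0 < \<delta>\<close>] \<pi>(1), folded \<gamma>_def]
  obtain \<gamma>' where \<gamma>': "discrete_plan {..m} {..m} (\<lambda>j. \<integral>x. ch j x \<partial>\<nu>) (\<lambda>i. \<integral>y. ch i y \<partial>\<mu>) \<gamma>'"
    "(\<Sum>j\<le>m. \<Sum>i\<le>m. \<gamma>' j i * center_dist b j i) \<le> (\<Sum>j\<le>m. \<Sum>i\<le>m. \<gamma> j i * center_dist b j i)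
      + 2 * R * (\<Sum>i\<le>m. \<bar>(\<integral>y. ch i y \<partial>\<mu>) - (\<integral>y. ch i y \<partial>\<mu>')\<bar>)"
    by (rule discrete_plan_change_marginal[OF finite_atMost finite_atMost discretized(1),
          where p="\<lambda>i. \<integral>y. ch i y \<partial>\<mu>" and c="center_dist b" and C="2 * R"])
      (use cell_partitionD(1)[OF part] sum_integral_cell_partition[OF part] P1 center_dist_nonneg
        center_dist_le[OF part _ _ \<open>0 \<le> R\<close>] \<open>0 \<le> R\<close> in \<open>auto simp: integral_nonneg\<close>)
  obtain \<pi>' where \<pi>': "\<pi>' \<in> couplings \<nu> \<mu>"
    "cost \<pi>' \<le> ennreal (\<Sum>j\<le>m. \<Sum>i\<le>m. \<gamma>' j i * center_dist b j i)
      + (ennreal \<delta> + 2 * tail_moment x0 R \<nu>) + (ennreal \<delta> + 2 * tail_moment x0 R \<mu>)"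
    using coupling_of_discrete_plan[OF P P1(1,2) part \<gamma>'(1)] by blast
  have three: "ennreal \<delta> + 2 * tail_moment x0 R \<kappa> \<le> ennreal (3 * \<delta>)"
    if "tail_moment x0 R \<kappa> \<le> ennreal \<delta>" for \<kappa>
  proof -
    have "ennreal \<delta> + 2 * tail_moment x0 R \<kappa> \<le> ennreal \<delta> + 2 * ennreal \<delta>"
      using that by (intro add_left_mono mult_left_mono) auto
    also have "\<dots> = (1 + 2) * ennreal \<delta>"
      by (simp only: distrib_right mult_1)
    also have "\<dots> = ennreal (3 * \<delta>)"
      using \<open>0 < \<delta>\<close> by (simp add: ennreal_mult)
    finally show ?thesis .
  qed
  define S' where "S' = (\<Sum>j\<le>m. \<Sum>i\<le>m. \<gamma>' j i * center_dist b j i)"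
  have "0 \<le> S'"
    unfolding S'_def using discrete_planD(1)[OF \<gamma>'(1)] center_dist_nonneg by (intro sum_nonneg mult_nonneg_nonneg) auto
  have "cost \<pi>' \<le> ennreal S' + ennreal (3 * \<delta>) + ennreal (3 * \<delta>)"
    using \<pi>'(2) three[OF tails(1)] three[OF tails(2)] unfolding S'_def[symmetric] by (meson add_mono order_trans order_refl)
  also have "\<dots> = ennreal (S' + 6 * \<delta>)"
    using \<open>0 \<le> S'\<close> \<open>0 < \<delta>\<close> by (simp add: ennreal_plus[symmetric] del: ennreal_plus)
  finally have "W1 \<nu> \<mu> \<le> S' + 6 * \<delta>"
    using W1_le_of_cost_le[OF P P1(1,2) \<pi>'(1)] \<open>0 \<le> S'\<close> \<open>0 < \<delta>\<close> by simp
  moreover have "(\<Sum>j\<le>m. \<Sum>i\<le>m. \<gamma> j i * center_dist b j i) \<le> W1 \<nu> \<mu>' + 3 * \<delta>"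
  proof -
    have "ennreal (\<Sum>j\<le>m. \<Sum>i\<le>m. \<gamma> j i * center_dist b j i) \<le> ennreal (W1 \<nu> \<mu>' + \<delta>) + ennreal (2 * \<delta>)"
      using discretized(2) \<pi>(2) by (meson add_right_mono less_imp_le order_trans)
    also have "\<dots> = ennreal (W1 \<nu> \<mu>' + 3 * \<delta>)"
      using W1_nonneg[of \<nu> \<mu>'] \<open>0 < \<delta>\<close> by (simp add: ennreal_plus[symmetric] del: ennreal_plus)
    finally show ?thesis
      using W1_nonneg[of \<nu> \<mu>'] \<open>0 < \<delta>\<close> by (subst (asm) ennreal_le_iff) auto
  qed
  ultimately show ?thesis
    using \<gamma>'(2) unfolding S'_def by linarith
qed

lemma W1_lsc_narrow:
  fixes \<nu> \<mu> :: "'a::metric_space measure" and \<mu>s :: "nat \<Rightarrow> 'a measure"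
  assumes P: "proper_space TYPE('a)" and P1: "\<nu> \<in> P1" "\<mu> \<in> P1" "\<And>n. \<mu>s n \<in> P1"
    and narrow: "narrow_conv \<mu>s \<mu>" and "e > 0"
  shows "eventually (\<lambda>n. W1 \<nu> \<mu> < W1 \<nu> (\<mu>s n) + e) sequentially"
proof -
  define \<delta> where "\<delta> = e / 10"
  have \<delta>: "0 < \<delta>" using \<open>e > 0\<close> unfolding \<delta>_def by simp
  fix x0 :: 'a
  have "eventually (\<lambda>R. 0 < R \<and> tail_moment x0 R \<nu> < ennreal \<delta> \<and> tail_moment x0 R \<mu> < ennreal \<delta>) at_top"
    using \<delta> by (intro eventually_conj eventually_gt_at_top tail_moment_eventually_less P1) simp_all
  then obtain R where R: "0 < R" "tail_moment x0 R \<nu> \<le> ennreal \<delta>" "tail_moment x0 R \<mu> \<le> ennreal \<delta>"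
    by (auto simp: eventually_at_top_linorder less_imp_le)
  obtain m b ch where part: "cell_partition x0 R \<delta> m b ch"
    using cell_partition_exists[OF P \<delta>] by blast
  have "(\<lambda>n. \<integral>y. ch i y \<partial>\<mu>s n) \<longlonglongrightarrow> (\<integral>y. ch i y \<partial>\<mu>)" if "i \<le> m" for i
  proof -
    have "bounded (range (ch i))"
      using cell_partitionD(1)[OF part] cell_partition_le_1[OF part that]
      by (auto simp: bounded_iff intro!: exI[of _ 1])
    then show ?thesis using narrow cell_partitionD(3)[OF part] unfolding narrow_conv_def by blast
  qed
  then have "(\<lambda>n. 2 * R * (\<Sum>i\<le>m. \<bar>(\<integral>y. ch i y \<partial>\<mu>) - (\<integral>y. ch i y \<partial>\<mu>s n)\<bar>))
      \<longlonglongrightarrow> 2 * R * (\<Sum>i\<le>m. \<bar>(\<integral>y. ch i y \<partial>\<mu>) - (\<integral>y. ch i y \<partial>\<mu>)\<bar>)"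
    by (intro tendsto_intros) auto
  then have "eventually (\<lambda>n. 2 * R * (\<Sum>i\<le>m. \<bar>(\<integral>y. ch i y \<partial>\<mu>) - (\<integral>y. ch i y \<partial>\<mu>s n)\<bar>) < \<delta>) sequentially"
    using \<delta> by (intro order_tendstoD) auto
  then show ?thesis
  proof (rule eventually_mono)
    fix n
    assume "2 * R * (\<Sum>i\<le>m. \<bar>(\<integral>y. ch i y \<partial>\<mu>) - (\<integral>y. ch i y \<partial>\<mu>s n)\<bar>) < \<delta>"
    then show "W1 \<nu> \<mu> < W1 \<nu> (\<mu>s n) + e"
      using W1_le_cell_defect[OF P P1(1,2,3) part \<delta> less_imp_le[OF R(1)] R(2,3), of n]
      unfolding \<delta>_def by linarith
  qed
qed

lemma tendsto_components_of_sum_max: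
  fixes ls :: "nat \<Rightarrow> nat \<Rightarrow> real" and \<nu>s :: "nat \<Rightarrow> nat \<Rightarrow> 'a::metric_space measure"
  assumes lim: "(\<lambda>n. (\<Sum>i<N. \<bar>ls n i - l i\<bar>) + Max ((\<lambda>i. W1 (\<nu>s n i) (\<nu> i)) ` {..<N})) \<longlonglongrightarrow> 0"
    and "i < N"
  shows "(\<lambda>n. ls n i) \<longlonglongrightarrow> l i" "(\<lambda>n. W1 (\<nu>s n i) (\<nu> i)) \<longlonglongrightarrow> 0"
proof -
  define total where "total = (\<lambda>n. (\<Sum>i<N. \<bar>ls n i - l i\<bar>) + Max ((\<lambda>i. W1 (\<nu>s n i) (\<nu> i)) ` {..<N}))"
  have total: "total \<longlonglongrightarrow> 0" using lim unfolding total_def .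
  have Max: "W1 (\<nu>s n i) (\<nu> i) \<le> Max ((\<lambda>i. W1 (\<nu>s n i) (\<nu> i)) ` {..<N})" for n
    using \<open>i < N\<close> by (intro Max_ge) auto
  have sum: "\<bar>ls n i - l i\<bar> \<le> (\<Sum>i<N. \<bar>ls n i - l i\<bar>)" for n
    using \<open>i < N\<close> member_le_sum[of i "{..<N}" "\<lambda>i. \<bar>ls n i - l i\<bar>"] by simp
  have sum0: "0 \<le> (\<Sum>i<N. \<bar>ls n i - l i\<bar>)" for n
    by (simp add: sum_nonneg)
  have bound1: "\<bar>ls n i - l i\<bar> \<le> total n" for n
    using Max[of n] sum[of n] W1_nonneg[of "\<nu>s n i" "\<nu> i"] unfolding total_def by linarith
  have bound2: "W1 (\<nu>s n i) (\<nu> i) \<le> total n" for n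
    using Max[of n] sum0[of n] unfolding total_def by linarith
  have "(\<lambda>n. \<bar>ls n i - l i\<bar>) \<longlonglongrightarrow> 0"
    by (rule tendsto_sandwich[OF always_eventually always_eventually tendsto_const total]) (simp_all add: bound1)
  then have "(\<lambda>n. ls n i - l i) \<longlonglongrightarrow> 0" by (rule tendsto_rabs_zero_cancel)
  then show "(\<lambda>n. ls n i) \<longlonglongrightarrow> l i" by (rule LIM_zero_cancel)
  show "(\<lambda>n. W1 (\<nu>s n i) (\<nu> i)) \<longlonglongrightarrow> 0"
    by (rule tendsto_sandwich[OF always_eventually always_eventually tendsto_const total]) (simp_all add: bound2 W1_nonneg)
qed

section \<open>Gamma-convergence of the weighted median functionals\<close>

lemma Fmed_tendsto:
  fixes \<nu> :: "nat \<Rightarrow> 'a::metric_space measure" and \<nu>s :: "nat \<Rightarrow> nat \<Rightarrow> 'a measure"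
  assumes P: "proper_space TYPE('a)" and P1: "\<forall>i<N. \<nu> i \<in> P1" "\<forall>n. \<forall>i<N. \<nu>s n i \<in> P1" "\<mu> \<in> P1"
    and ls: "\<And>i. i < N \<Longrightarrow> (\<lambda>n. ls n i) \<longlonglongrightarrow> l i"
    and W: "\<And>i. i < N \<Longrightarrow> (\<lambda>n. W1 (\<nu>s n i) (\<nu> i)) \<longlonglongrightarrow> 0"
  shows "(\<lambda>n. Fmed N (ls n) (\<nu>s n) \<mu>) \<longlonglongrightarrow> Fmed N l \<nu> \<mu>"
proof -
  have "(\<lambda>n. W1 (\<nu>s n i) \<mu>) \<longlonglongrightarrow> W1 (\<nu> i) \<mu>" if "i < N" for i
  proof -
    have "\<bar>W1 (\<nu>s n i) \<mu> - W1 (\<nu> i) \<mu>\<bar> \<le> W1 (\<nu>s n i) (\<nu> i)" for n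
      using W1_lipschitz[OF P P1(3)] P1(1,2) that by simp
    then have "(\<lambda>n. \<bar>W1 (\<nu>s n i) \<mu> - W1 (\<nu> i) \<mu>\<bar>) \<longlonglongrightarrow> 0"
      by (intro tendsto_sandwich[OF always_eventually always_eventually tendsto_const W[OF that]]) simp_all
    then have "(\<lambda>n. W1 (\<nu>s n i) \<mu> - W1 (\<nu> i) \<mu>) \<longlonglongrightarrow> 0" by (rule tendsto_rabs_zero_cancel)
    then show ?thesis by (rule LIM_zero_cancel)
  qed
  then show ?thesis
    unfolding Fmed_def using ls by (intro tendsto_sum tendsto_mult) auto
qed

lemma W1_eventually_gt_narrow:
  fixes \<nu> \<mu> :: "'a::metric_space measure" and \<nu>s \<mu>s :: "nat \<Rightarrow> 'a measure"
  assumes P: "proper_space TYPE('a)" and \<nu>: "\<nu> \<in> P1" "\<And>n. \<nu>s n \<in> P1" "(\<lambda>n. W1 (\<nu>s n) \<nu>) \<longlonglongrightarrow> 0"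
    and \<mu>: "\<mu> \<in> P1" "\<And>n. \<mu>s n \<in> P1" "narrow_conv \<mu>s \<mu>" and "e > 0"
  shows "eventually (\<lambda>n. W1 \<nu> \<mu> < W1 (\<nu>s n) (\<mu>s n) + e) sequentially"
proof -
  have "eventually (\<lambda>n. W1 \<nu> \<mu> < W1 \<nu> (\<mu>s n) + e / 2) sequentially"
    using W1_lsc_narrow[OF P \<nu>(1) \<mu>] \<open>e > 0\<close> by simp
  moreover have "eventually (\<lambda>n. W1 (\<nu>s n) \<nu> < e / 2) sequentially"
    using order_tendstoD(2)[OF \<nu>(3), of "e / 2"] \<open>e > 0\<close> by simp
  ultimately show ?thesis
  proof eventually_elim
    case (elim n)
    then show ?case
      using W1_triangle[OF P \<nu>(1) \<nu>(2)[of n] \<mu>(2)[of n]] W1_sym[OF \<nu>(1) \<nu>(2)[of n]] by linarith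
  qed
qed

lemma Fmed_liminf:
  fixes \<nu> :: "nat \<Rightarrow> 'a::metric_space measure" and \<nu>s :: "nat \<Rightarrow> nat \<Rightarrow> 'a measure"
  assumes P: "proper_space TYPE('a)" and P1: "\<forall>i<N. \<nu> i \<in> P1" "\<forall>n. \<forall>i<N. \<nu>s n i \<in> P1"
    and nonneg: "\<And>n i. i < N \<Longrightarrow> 0 \<le> ls n i" "\<And>i. i < N \<Longrightarrow> 0 \<le> l i"
    and ls: "\<And>i. i < N \<Longrightarrow> (\<lambda>n. ls n i) \<longlonglongrightarrow> l i"
    and W: "\<And>i. i < N \<Longrightarrow> (\<lambda>n. W1 (\<nu>s n i) (\<nu> i)) \<longlonglongrightarrow> 0"
    and \<mu>: "\<mu> \<in> P1" "\<And>n. \<mu>s n \<in> P1" "narrow_conv \<mu>s \<mu>"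
    and c: "c < Fmed N l \<nu> \<mu>"
  shows "eventually (\<lambda>n. c < Fmed N (ls n) (\<nu>s n) (\<mu>s n)) sequentially"
proof -
  define L where "L = (\<Sum>i<N. l i)"
  have "0 \<le> L" unfolding L_def using nonneg(2) by (intro sum_nonneg) auto
  define \<delta> where "\<delta> = (Fmed N l \<nu> \<mu> - c) / (4 * (L + 1))"
  have \<delta>: "0 < \<delta>" unfolding \<delta>_def using c \<open>0 \<le> L\<close> by simp
  define g where "g i = max 0 (W1 (\<nu> i) \<mu> - 2 * \<delta>)" for i
  have ev: "eventually (\<lambda>n. \<forall>i\<in>{..<N}. g i \<le> W1 (\<nu>s n i) (\<mu>s n)) sequentially"
  proof (rule eventually_ball_finite[OF finite_lessThan], intro ballI)
    fix i assume "i \<in> {..<N}"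
    then have "eventually (\<lambda>n. W1 (\<nu> i) \<mu> < W1 (\<nu>s n i) (\<mu>s n) + 2 * \<delta>) sequentially"
      using P1 W \<delta> by (intro W1_eventually_gt_narrow[OF P _ _ _ \<mu>]) auto
    then show "eventually (\<lambda>n. g i \<le> W1 (\<nu>s n i) (\<mu>s n)) sequentially"
      unfolding g_def by eventually_elim (simp add: W1_nonneg)
  qed
  have "c < (\<Sum>i<N. l i * g i)"
  proof -
    have "Fmed N l \<nu> \<mu> - 2 * \<delta> * L = (\<Sum>i<N. l i * (W1 (\<nu> i) \<mu> - 2 * \<delta>))"
      unfolding Fmed_def L_def by (simp add: algebra_simps sum_subtractf sum_distrib_left)
    also have "\<dots> \<le> (\<Sum>i<N. l i * g i)"
      using nonneg(2) unfolding g_def by (intro sum_mono mult_left_mono) auto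
    finally have le: "Fmed N l \<nu> \<mu> - 2 * \<delta> * L \<le> (\<Sum>i<N. l i * g i)" .
    have "2 * \<delta> * L = (Fmed N l \<nu> \<mu> - c) * (2 * L / (4 * (L + 1)))"
      unfolding \<delta>_def using \<open>0 \<le> L\<close> by (simp add: field_simps)
    also have "\<dots> < (Fmed N l \<nu> \<mu> - c) * 1"
      using c \<open>0 \<le> L\<close> by (intro mult_strict_left_mono) (auto simp: field_simps)
    finally have "2 * \<delta> * L < Fmed N l \<nu> \<mu> - c" by simp
    then show ?thesis using le by linarith
  qed
  moreover have "(\<lambda>n. \<Sum>i<N. ls n i * g i) \<longlonglongrightarrow> (\<Sum>i<N. l i * g i)"
    using ls by (intro tendsto_sum tendsto_mult tendsto_const) auto
  ultimately have "eventually (\<lambda>n. c < (\<Sum>i<N. ls n i * g i)) sequentially"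
    by (simp add: order_tendstoD(1))
  with ev show ?thesis
  proof eventually_elim
    case (elim n)
    have "(\<Sum>i<N. ls n i * g i) \<le> Fmed N (ls n) (\<nu>s n) (\<mu>s n)"
      unfolding Fmed_def using elim(1) nonneg(1) by (intro sum_mono mult_left_mono) auto
    then show ?case using elim(2) by linarith
  qed
qed

lemma gamma_conv_narrow_Fmed:
  fixes \<nu> :: "nat \<Rightarrow> 'a::metric_space measure" and \<nu>s :: "nat \<Rightarrow> nat \<Rightarrow> 'a measure"
  assumes P: "proper_space TYPE('a)" and P1: "\<forall>i<N. \<nu> i \<in> P1" "\<forall>n. \<forall>i<N. \<nu>s n i \<in> P1"
    and nonneg: "\<And>n i. i < N \<Longrightarrow> 0 \<le> ls n i" "\<And>i. i < N \<Longrightarrow> 0 \<le> l i"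
    and ls: "\<And>i. i < N \<Longrightarrow> (\<lambda>n. ls n i) \<longlonglongrightarrow> l i"
    and W: "\<And>i. i < N \<Longrightarrow> (\<lambda>n. W1 (\<nu>s n i) (\<nu> i)) \<longlonglongrightarrow> 0"
  shows "gamma_conv_narrow (\<lambda>n. Fmed N (ls n) (\<nu>s n)) (Fmed N l \<nu>)"
  unfolding gamma_conv_narrow_def
proof (intro conjI ballI allI impI)
  fix \<mu> :: "'a measure" and \<mu>s assume "\<mu> \<in> P1" "(\<forall>n. \<mu>s n \<in> P1) \<and> narrow_conv \<mu>s \<mu>"
  then have ev: "eventually (\<lambda>n. c < Fmed N (ls n) (\<nu>s n) (\<mu>s n)) sequentially"
    if "c < Fmed N l \<nu> \<mu>" for c
    using Fmed_liminf[OF P P1 nonneg ls W _ _ _ that] by blast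
  show "ereal (Fmed N l \<nu> \<mu>) \<le> liminf (\<lambda>n. ereal (Fmed N (ls n) (\<nu>s n) (\<mu>s n)))"
  proof (subst le_Liminf_iff, intro allI impI)
    fix y assume y: "y < ereal (Fmed N l \<nu> \<mu>)"
    show "eventually (\<lambda>n. y < ereal (Fmed N (ls n) (\<nu>s n) (\<mu>s n))) sequentially"
    proof (cases y)
      case (real c)
      with y ev[of c] show ?thesis by (auto elim: eventually_mono)
    qed (use y in simp_all)
  qed
next
  fix \<mu> :: "'a measure" assume "\<mu> \<in> P1"
  then have "(\<lambda>n. ereal (Fmed N (ls n) (\<nu>s n) \<mu>)) \<longlonglongrightarrow> ereal (Fmed N l \<nu> \<mu>)"
    using Fmed_tendsto[OF P P1 _ ls W] by (intro tendsto_ereal)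
  then have "limsup (\<lambda>n. ereal (Fmed N (ls n) (\<nu>s n) \<mu>)) = ereal (Fmed N l \<nu> \<mu>)"
    by (intro lim_imp_Limsup) simp_all
  moreover have "narrow_conv (\<lambda>_. \<mu>) \<mu>" unfolding narrow_conv_def by simp
  ultimately show "\<exists>\<mu>s. (\<forall>n. \<mu>s n \<in> P1) \<and> narrow_conv \<mu>s \<mu> \<and>
      limsup (\<lambda>n. ereal (Fmed N (ls n) (\<nu>s n) (\<mu>s n))) \<le> ereal (Fmed N l \<nu> \<mu>)"
    using \<open>\<mu> \<in> P1\<close> by (intro exI[of _ "\<lambda>_. \<mu>"]) simp
qed

lemma narrow_cluster_point_Med:
  fixes \<nu> :: "nat \<Rightarrow> 'a::metric_space measure" and \<nu>s :: "nat \<Rightarrow> nat \<Rightarrow> 'a measure"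
  assumes P: "proper_space TYPE('a)" and P1: "\<forall>i<N. \<nu> i \<in> P1" "\<forall>n. \<forall>i<N. \<nu>s n i \<in> P1"
    and nonneg: "\<And>n i. i < N \<Longrightarrow> 0 \<le> ls n i" "\<And>i. i < N \<Longrightarrow> 0 \<le> l i"
    and ls: "\<And>i. i < N \<Longrightarrow> (\<lambda>n. ls n i) \<longlonglongrightarrow> l i"
    and W: "\<And>i. i < N \<Longrightarrow> (\<lambda>n. W1 (\<nu>s n i) (\<nu> i)) \<longlonglongrightarrow> 0"
    and Med: "\<And>n. \<mu>s n \<in> Med N (ls n) (\<nu>s n)" and \<mu>: "\<mu> \<in> P1" "narrow_cluster_point \<mu>s \<mu>"
  shows "\<mu> \<in> Med N l \<nu>"
proof -
  obtain r where r: "strict_mono r" "narrow_conv (\<mu>s \<circ> r) \<mu>"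
    using \<mu>(2) unfolding narrow_cluster_point_def by blast
  have sub: "\<And>i. i < N \<Longrightarrow> (\<lambda>n. ls (r n) i) \<longlonglongrightarrow> l i" "\<And>i. i < N \<Longrightarrow> (\<lambda>n. W1 (\<nu>s (r n) i) (\<nu> i)) \<longlonglongrightarrow> 0"
    using LIMSEQ_subseq_LIMSEQ[OF ls r(1)] LIMSEQ_subseq_LIMSEQ[OF W r(1)] by (simp_all add: comp_def)
  have P1_sub: "\<forall>n. \<forall>i<N. \<nu>s (r n) i \<in> P1" "\<And>n. \<mu>s (r n) \<in> P1"
    using P1(2) Med unfolding Med_def by auto
  have narrow_sub: "narrow_conv (\<lambda>n. \<mu>s (r n)) \<mu>"
    using r(2) by (simp add: comp_def)
  have "Fmed N l \<nu> \<mu> \<le> Fmed N l \<nu> \<mu>'" if "\<mu>' \<in> P1" for \<mu>' :: "'a measure"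
  proof (rule ccontr)
    assume "\<not> ?thesis"
    then obtain c where c: "Fmed N l \<nu> \<mu>' < c" "c < Fmed N l \<nu> \<mu>"
      using dense[of "Fmed N l \<nu> \<mu>'" "Fmed N l \<nu> \<mu>"] by auto
    have "eventually (\<lambda>n. c < Fmed N (ls (r n)) (\<nu>s (r n)) (\<mu>s (r n))) sequentially"
      using Fmed_liminf[OF P P1(1) P1_sub(1) nonneg(1) nonneg(2) sub \<mu>(1) P1_sub(2) narrow_sub c(2)] .
    moreover have "eventually (\<lambda>n. Fmed N (ls (r n)) (\<nu>s (r n)) \<mu>' < c) sequentially"
      using order_tendstoD(2)[OF Fmed_tendsto[OF P P1(1) P1_sub(1) that sub] c(1)] .
    ultimately have "eventually (\<lambda>n. False) sequentially"
    proof eventually_elim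
      case (elim n)
      have "Fmed N (ls (r n)) (\<nu>s (r n)) (\<mu>s (r n)) \<le> Fmed N (ls (r n)) (\<nu>s (r n)) \<mu>'"
        using Med[of "r n"] that unfolding Med_def by blast
      with elim show False by linarith
    qed
    then show False by simp
  qed
  then show ?thesis using \<mu>(1) unfolding Med_def by blast
qed

theorem lemma3p1:
  fixes l :: "nat \<Rightarrow> real" and \<nu> :: "nat \<Rightarrow> 'a::metric_space measure"
    and ls :: "nat \<Rightarrow> nat \<Rightarrow> real" and \<nu>s :: "nat \<Rightarrow> nat \<Rightarrow> 'a measure"
    and N :: nat
  assumes "proper_space TYPE('a)"
    and "N \<ge> 1"
    and "l \<in> unit_simplex N" and "\<forall>i<N. \<nu> i \<in> P1"
    and "\<forall>n. ls n \<in> unit_simplex N" and "\<forall>n. \<forall>i<N. \<nu>s n i \<in> P1"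
    and "(\<lambda>n. (\<Sum>i<N. \<bar>ls n i - l i\<bar>) + Max ((\<lambda>i. W1 (\<nu>s n i) (\<nu> i)) ` {..<N})) \<longlonglongrightarrow> 0"
  shows "gamma_conv_narrow (\<lambda>n. Fmed N (ls n) (\<nu>s n)) (Fmed N l \<nu>) \<and>
         (\<forall>\<mu>s. (\<forall>n. \<mu>s n \<in> Med N (ls n) (\<nu>s n)) \<longrightarrow>
            (\<forall>\<mu> \<in> P1. narrow_cluster_point \<mu>s \<mu> \<longrightarrow> \<mu> \<in> Med N l \<nu>))"
proof -
  have nonneg: "\<And>n i. i < N \<Longrightarrow> 0 \<le> ls n i" "\<And>i. i < N \<Longrightarrow> 0 \<le> l i"
    using assms(3,5) unfolding unit_simplex_def by auto
  have ls: "(\<lambda>n. ls n i) \<longlonglongrightarrow> l i" if "i < N" for i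
    using tendsto_components_of_sum_max(1)[OF assms(7) that] .
  have W: "(\<lambda>n. W1 (\<nu>s n i) (\<nu> i)) \<longlonglongrightarrow> 0" if "i < N" for i
    using tendsto_components_of_sum_max(2)[OF assms(7) that] .
  show ?thesis
    using gamma_conv_narrow_Fmed[where ls=ls and l=l, OF assms(1,4,6) nonneg ls W]
      narrow_cluster_point_Med[where ls=ls and l=l, OF assms(1,4,6) nonneg ls W] by blast
qed

end
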